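(* Suppose that $M=1$ and $\theta\neq\omega^2$. Then $\beta$ is contained in the $\mathcal{O}$-span of the symbols $\alpha_{\chi,\psi}=\alpha^{1,1}_{\chi,\psi}$ with $\chi\in X_N\setminus\{\omega^2,\theta\omega^{-2}\}$ (and $\psi=\theta\chi^{-1}$). In particular, $\beta\in A$.
   Context: $p$ is an odd prime, $M=1$, and $N=Mp=p$. $\Delta=(\mathbb{Z}/N\mathbb{Z})^\times/\langle-1\rangle$; $H$ is a space of level $N$ modular symbols: a $\mathbb{Z}_p[\Delta]$-module spanned by symbols $[u:v]$ ($u,v\in\mathbb{Z}/N\mathbb{Z}$ generating the unit ideal) satisfying $[u:v]=[-u:-v]=-[-v:u]$, $[u:v]=[u:u+v]+[u+v:v]$, $\langle a\rangle[u:v]=[au:av]$. $\theta:\Delta\to\mathbb{C}_p^\times$ is a character, $\omega$ the Teichmüller character of $(\mathbb{Z}/p\mathbb{Z})^\times$; it is assumed that the conductor of $\theta\omega^{-2}$ is $p$ if $p=3$. $\mathcal{O}=\mathbb{Z}_p[\mu_{\varphi(N)}]$, $X_N=\mathrm{Hom}((\mathbb{Z}/N\mathbb{Z})^\times,\mathcal{O}^\times)$, $e_\theta=\frac1{\varphi(N)}\sum_a\theta^{-1}(a)\langle a\rangle$, $H^\theta=e_\theta(H\otimes\mathcal{O})$. For $\chi\in X_N$, $\psi=\theta\chi^{-1}$ and relatively prime divisors $g,h$ of $N$, $\alpha^{g,h}_{\chi,\psi}=\frac1{\varphi(N)^2}\sum_{a,b\in(\mathbb{Z}/N\mathbb{Z})^\times}\chi^{-1}(a)\psi^{-1}(b)[ga:hb]$.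 Set $\beta=\alpha^{1,1}_{\omega^2,\theta\omega^{-2}}$, and let $A\subseteq H^\theta$ be the $\mathcal{O}$-span of all $\alpha^{g,h}_{\chi,\psi}$ with $\chi\notin\{\omega^2,\theta\omega^{-2}\}$ and $g,h$ relatively prime divisors of $N$. *)

theory Defs
  imports "HOL-Algebra.Ring" "HOL-Number_Theory.Number_Theory"
begin

text \<open>Z_p is modelled as the inverse limit of the rings Z/p^n Z: an element is a
compatible sequence x with 0 \<le> x n < p^n and x (n+1) mod p^n = x n.
Ring operations are componentwise (reduced mod p^n).\<close>

definition padic_ints :: "nat \<Rightarrow> (nat \<Rightarrow> int) ring" where
  "padic_ints p =
     \<lparr>carrier = {x. \<forall>n. 0 \<le> x n \<and> x n < int p ^ n \<and> x (Suc n) mod int p ^ n = x n},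
      mult = (\<lambda>x y n. (x n * y n) mod int p ^ n),
      one = (\<lambda>n. 1 mod int p ^ n),
      zero = (\<lambda>n. 0),
      add = (\<lambda>x y n. (x n + y n) mod int p ^ n)\<rparr>"

definition zp_of_int :: "nat \<Rightarrow> int \<Rightarrow> (nat \<Rightarrow> int)" where
  "zp_of_int p k = (\<lambda>n. k mod int p ^ n)"

text \<open>Here N = p, and O = Z_p[mu_(phi(N))] = Z_p since mu_(p-1) is contained in Z_p.
A character of (Z/NZ)^x with values in O^x is represented (Dirichlet-style) by a
function on the integers that is N-periodic, multiplicative on units, unit-valued on
integers prime to N and zero on integers not prime to N.\<close>

definition is_char :: "nat \<Rightarrow> nat \<Rightarrow> (int \<Rightarrow> nat \<Rightarrow> int) \<Rightarrow> bool" where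
  "is_char p N \<chi> \<longleftrightarrow>
     (\<forall>a b. [a = b] (mod int N) \<longrightarrow> \<chi> a = \<chi> b) \<and>
     (\<forall>a. coprime a (int N) \<longrightarrow> \<chi> a \<in> Units (padic_ints p)) \<and>
     (\<forall>a. \<not> coprime a (int N) \<longrightarrow> \<chi> a = \<zero>\<^bsub>padic_ints p\<^esub>) \<and>
     (\<forall>a b. coprime a (int N) \<longrightarrow> coprime b (int N) \<longrightarrow>
         \<chi> (a * b) = \<chi> a \<otimes>\<^bsub>padic_ints p\<^esub> \<chi> b)"

definition char_group :: "nat \<Rightarrow> nat \<Rightarrow> (int \<Rightarrow> nat \<Rightarrow> int) set" where
  "char_group p N = {\<chi>. is_char p N \<chi>}"

text \<open>Characters of Delta = (Z/NZ)^x / <-1>: the even characters.\<close>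
definition is_Delta_char :: "nat \<Rightarrow> nat \<Rightarrow> (int \<Rightarrow> nat \<Rightarrow> int) \<Rightarrow> bool" where
  "is_Delta_char p N \<theta> \<longleftrightarrow> is_char p N \<theta> \<and> \<theta> (-1) = \<one>\<^bsub>padic_ints p\<^esub>"

definition char_mult :: "nat \<Rightarrow> nat \<Rightarrow> (int \<Rightarrow> nat \<Rightarrow> int) \<Rightarrow> (int \<Rightarrow> nat \<Rightarrow> int) \<Rightarrow> (int \<Rightarrow> nat \<Rightarrow> int)" where
  "char_mult p N \<chi> \<psi> = (\<lambda>a. if coprime a (int N) then \<chi> a \<otimes>\<^bsub>padic_ints p\<^esub> \<psi> a
                                else \<zero>\<^bsub>padic_ints p\<^esub>)"

definition char_inv :: "nat \<Rightarrow> nat \<Rightarrow> (int \<Rightarrow> nat \<Rightarrow> int) \<Rightarrow> (int \<Rightarrow> nat \<Rightarrow> int)" where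
  "char_inv p N \<chi> = (\<lambda>a. if coprime a (int N) then inv\<^bsub>padic_ints p\<^esub> (\<chi> a)
                         else \<zero>\<^bsub>padic_ints p\<^esub>)"

definition teichmuller :: "nat \<Rightarrow> int \<Rightarrow> nat \<Rightarrow> int" where
  "teichmuller p a = (if coprime a (int p) then
      (THE x. x \<in> carrier (padic_ints p) \<and> x [^]\<^bsub>padic_ints p\<^esub> (p - 1) = \<one>\<^bsub>padic_ints p\<^esub>
              \<and> x 1 = a mod int p)
     else \<zero>\<^bsub>padic_ints p\<^esub>)"

definition zp_span :: "nat \<Rightarrow> ((nat \<Rightarrow> int) \<Rightarrow> 'h \<Rightarrow> 'h::ab_group_add) \<Rightarrow> 'h set \<Rightarrow> 'h set" where
  "zp_span p smul S = {v. \<exists>F c. finite F \<and> F \<subseteq> S \<and> (\<forall>x\<in>F. c x \<in> carrier (padic_ints p)) \<and>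
                             v = (\<Sum>x\<in>F. smul (c x) x)}"

definition zp_module :: "nat \<Rightarrow> ((nat \<Rightarrow> int) \<Rightarrow> 'h \<Rightarrow> 'h::ab_group_add) \<Rightarrow> bool" where
  "zp_module p smul \<longleftrightarrow>
     (\<forall>x\<in>carrier (padic_ints p). \<forall>y\<in>carrier (padic_ints p). \<forall>v.
         smul (x \<oplus>\<^bsub>padic_ints p\<^esub> y) v = smul x v + smul y v \<and>
         smul (x \<otimes>\<^bsub>padic_ints p\<^esub> y) v = smul x (smul y v)) \<and>
     (\<forall>x\<in>carrier (padic_ints p). \<forall>v w. smul x (v + w) = smul x v + smul x w) \<and>
     (\<forall>v. smul \<one>\<^bsub>padic_ints p\<^esub> v = v)"

definition unimodular :: "nat \<Rightarrow> int \<Rightarrow> int \<Rightarrow> bool" where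
  "unimodular N u v \<longleftrightarrow> coprime (gcd u v) (int N)"

text \<open>A space of level N modular symbols (tensored with O): a Z_p-module H with a
Z_p-linear action dia of the diamond operators <a>, spanned over Z_p by symbols
msym u v = [u:v] (u, v taken modulo N, generating the unit ideal) subject to the
Manin relations.\<close>
definition modsym_space :: "nat \<Rightarrow> nat \<Rightarrow> ((nat \<Rightarrow> int) \<Rightarrow> 'h \<Rightarrow> 'h::ab_group_add)
     \<Rightarrow> (int \<Rightarrow> 'h \<Rightarrow> 'h) \<Rightarrow> (int \<Rightarrow> int \<Rightarrow> 'h) \<Rightarrow> bool" where
  "modsym_space p N smul dia msym \<longleftrightarrow>
     zp_module p smul \<and>
     (\<forall>u v u' v'. [u = u'] (mod int N) \<longrightarrow> [v = v'] (mod int N) \<longrightarrow> msym u v = msym u' v') \<and>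
     (\<forall>u v. unimodular N u v \<longrightarrow> msym u v = msym (-u) (-v)) \<and>
     (\<forall>u v. unimodular N u v \<longrightarrow> msym u v = - msym (-v) u) \<and>
     (\<forall>u v. unimodular N u v \<longrightarrow> msym u v = msym u (u + v) + msym (u + v) v) \<and>
     (\<forall>a v w. coprime a (int N) \<longrightarrow> dia a (v + w) = dia a v + dia a w) \<and>
     (\<forall>a x v. coprime a (int N) \<longrightarrow> x \<in> carrier (padic_ints p) \<longrightarrow>
         dia a (smul x v) = smul x (dia a v)) \<and>
     (\<forall>a a' v. [a = a'] (mod int N) \<longrightarrow> dia a v = dia a' v) \<and>
     (\<forall>a u v. coprime a (int N) \<longrightarrow> unimodular N u v \<longrightarrow> dia a (msym u v) = msym (a * u) (a * v)) \<and>
     zp_span p smul {msym u v | u v. unimodular N u v} = UNIV"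

definition alpha_sym :: "nat \<Rightarrow> nat \<Rightarrow> ((nat \<Rightarrow> int) \<Rightarrow> 'h \<Rightarrow> 'h::ab_group_add)
     \<Rightarrow> (int \<Rightarrow> int \<Rightarrow> 'h) \<Rightarrow> int \<Rightarrow> int \<Rightarrow> (int \<Rightarrow> nat \<Rightarrow> int) \<Rightarrow> (int \<Rightarrow> nat \<Rightarrow> int) \<Rightarrow> 'h" where
  "alpha_sym p N smul msym g h \<chi> \<psi> =
     smul (inv\<^bsub>padic_ints p\<^esub> (zp_of_int p (int (totient N) ^ 2)))
       (\<Sum>a\<in>{a\<in>{0..<int N}. coprime a (int N)}. \<Sum>b\<in>{b\<in>{0..<int N}. coprime b (int N)}.
          smul (char_inv p N \<chi> a \<otimes>\<^bsub>padic_ints p\<^esub> char_inv p N \<psi> b) (msym (g * a) (h * b)))"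

end

theory Submission
  imports Defs
begin

text \<open>Every character mod p is a power \<omega>^k of the Teichmueller character, and \<theta> = \<omega>^m with
  m even. Up to the unit \<phi>(p)^(-2), the symbol \<alpha>(\<omega>^k, \<omega>^(m-k)) is
  S_k = \<Sum>_(a,b) \<omega>^(-k)(a) \<omega>^(k-m)(b) [a:b]. The relation [u:v] = -[-v:u] gives S_(m-2) = -S_2.
  The three-term Manin relation, read through the Fourier transform of
  F(x) = \<Sum>_a \<omega>^(-m)(a) [a:ax], gives for every t with t, t+1 prime to p a linear relation
  \<Sum>_k c_k(t) S_k = 0 with explicit coefficients in Z_p. Merging the terms k = 2 and
  k = e \<equiv> m - 2, the coefficient of S_2 becomes c_2(t) - c_e(t), whose residue mod p is a
  polynomial in t; a power-sum computation shows that it does not vanish for every t. For such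
  a t the coefficient is a unit, so S_2 lies in the span of the other S_k. If e = 2, then
  S_2 = -S_2 and \<beta> = 0.\<close>

section \<open>The ring of p-adic integers\<close>

lemma zp_carrier_iff:
  "x \<in> carrier (padic_ints p) \<longleftrightarrow>
     (\<forall>n. 0 \<le> x n \<and> x n < int p ^ n \<and> x (Suc n) mod int p ^ n = x n)"
  by (simp add: padic_ints_def)

lemma padic_ints_simps:
  "mult (padic_ints p) x y = (\<lambda>n. (x n * y n) mod int p ^ n)"
  "add (padic_ints p) x y = (\<lambda>n. (x n + y n) mod int p ^ n)"
  "one (padic_ints p) = (\<lambda>n. 1 mod int p ^ n)"
  "zero (padic_ints p) = (\<lambda>n. 0)"
  by (simp_all add: padic_ints_def)

lemma zp_mod_prime_power:
  assumes "x \<in> carrier (padic_ints p)" "n \<le> m"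
  shows "x m mod int p ^ n = x n"
  using assms(2)
proof (induction m)
  case 0
  have "0 \<le> x 0" "x 0 < int p ^ 0" using assms(1) zp_carrier_iff[of x p] by blast+
  then show ?case using 0 by simp
next
  case (Suc m)
  show ?case
  proof (cases "n = Suc m")
    case True
    have "0 \<le> x (Suc m)" "x (Suc m) < int p ^ Suc m"
      using assms(1) zp_carrier_iff[of x p] by blast+
    then show ?thesis using True by (simp only:) (rule mod_pos_pos_trivial)
  next
    case False
    then have "n \<le> m" using Suc by simp
    have "x (Suc m) mod int p ^ n = (x (Suc m) mod int p ^ m) mod int p ^ n"
      by (simp add: \<open>n \<le> m\<close> le_imp_power_dvd mod_mod_cancel)
    also have "\<dots> = x m mod int p ^ n" using assms(1) by (simp add: zp_carrier_iff)
    finally show ?thesis using Suc.IH \<open>n \<le> m\<close> by simp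
  qed
qed

lemma zp_mod_prime:
  assumes "x \<in> carrier (padic_ints p)" "n \<ge> 1"
  shows "x n mod int p = x 1"
  using zp_mod_prime_power[OF assms(1), of 1 n] assms(2) by simp

lemma zp_reduce_in_carrier:
  assumes "p > 0" "\<And>n. f (Suc n) mod int p ^ n = f n mod int p ^ n"
  shows "(\<lambda>n. f n mod int p ^ n) \<in> carrier (padic_ints p)"
proof -
  have "(f (Suc n) mod int p ^ Suc n) mod int p ^ n = f n mod int p ^ n" for n
    using assms(2)[of n] by (simp add: mod_mod_cancel le_imp_power_dvd)
  then show ?thesis using assms(1) by (simp add: zp_carrier_iff)
qed

lemma zp_reduced: "x \<in> carrier (padic_ints p) \<Longrightarrow> x n mod int p ^ n = x n"
  using zp_mod_prime_power[of x p n n] by simp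

lemma zp_add_in_carrier:
  assumes "p > 0" "x \<in> carrier (padic_ints p)" "y \<in> carrier (padic_ints p)"
  shows "x \<oplus>\<^bsub>padic_ints p\<^esub> y \<in> carrier (padic_ints p)"
proof (unfold padic_ints_simps, rule zp_reduce_in_carrier[OF assms(1)])
  fix n
  show "(x (Suc n) + y (Suc n)) mod int p ^ n = (x n + y n) mod int p ^ n"
    using assms(2,3) unfolding zp_carrier_iff by (metis mod_add_eq)
qed

lemma zp_mult_in_carrier:
  assumes "p > 0" "x \<in> carrier (padic_ints p)" "y \<in> carrier (padic_ints p)"
  shows "x \<otimes>\<^bsub>padic_ints p\<^esub> y \<in> carrier (padic_ints p)"
proof (unfold padic_ints_simps, rule zp_reduce_in_carrier[OF assms(1)])
  fix n
  show "(x (Suc n) * y (Suc n)) mod int p ^ n = (x n * y n) mod int p ^ n"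
    using assms(2,3) unfolding zp_carrier_iff by (metis mod_mult_eq)
qed

lemma zp_uminus_in_carrier:
  assumes "p > 0" "x \<in> carrier (padic_ints p)"
  shows "(\<lambda>n. (- x n) mod int p ^ n) \<in> carrier (padic_ints p)"
proof (rule zp_reduce_in_carrier[OF assms(1)])
  fix n
  show "- x (Suc n) mod int p ^ n = - x n mod int p ^ n"
    using assms(2) unfolding zp_carrier_iff by (metis mod_minus_eq)
qed

lemma abelian_group_padic_ints:
  assumes "p > 0"
  shows "abelian_group (padic_ints p)"
proof (rule abelian_groupI)
  fix x y z
  show "(x \<oplus>\<^bsub>padic_ints p\<^esub> y) \<oplus>\<^bsub>padic_ints p\<^esub> z = x \<oplus>\<^bsub>padic_ints p\<^esub> (y \<oplus>\<^bsub>padic_ints p\<^esub> z)"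
    unfolding padic_ints_simps by (auto simp: mod_add_left_eq mod_add_right_eq add.assoc)
  show "x \<oplus>\<^bsub>padic_ints p\<^esub> y = y \<oplus>\<^bsub>padic_ints p\<^esub> x"
    unfolding padic_ints_simps by (auto simp: add.commute)
next
  fix x assume x: "x \<in> carrier (padic_ints p)"
  show "\<zero>\<^bsub>padic_ints p\<^esub> \<oplus>\<^bsub>padic_ints p\<^esub> x = x"
    unfolding padic_ints_simps using zp_reduced[OF x] by auto
  have "(\<lambda>n. (- x n) mod int p ^ n) \<oplus>\<^bsub>padic_ints p\<^esub> x = \<zero>\<^bsub>padic_ints p\<^esub>"
    unfolding padic_ints_simps by (auto simp: mod_add_left_eq)
  then show "\<exists>y\<in>carrier (padic_ints p). y \<oplus>\<^bsub>padic_ints p\<^esub> x = \<zero>\<^bsub>padic_ints p\<^esub>"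
    using zp_uminus_in_carrier[OF assms x] by blast
qed (use assms zp_add_in_carrier in \<open>auto simp: zp_carrier_iff padic_ints_simps\<close>)

lemma comm_monoid_padic_ints:
  assumes "p > 0"
  shows "comm_monoid (padic_ints p)"
proof (rule comm_monoidI)
  fix x y z
  show "(x \<otimes>\<^bsub>padic_ints p\<^esub> y) \<otimes>\<^bsub>padic_ints p\<^esub> z = x \<otimes>\<^bsub>padic_ints p\<^esub> (y \<otimes>\<^bsub>padic_ints p\<^esub> z)"
    unfolding padic_ints_simps by (auto simp: mod_mult_left_eq mod_mult_right_eq mult.assoc)
  show "x \<otimes>\<^bsub>padic_ints p\<^esub> y = y \<otimes>\<^bsub>padic_ints p\<^esub> x"
    unfolding padic_ints_simps by (auto simp: mult.commute)
next
  fix x assume "x \<in> carrier (padic_ints p)"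
  then show "\<one>\<^bsub>padic_ints p\<^esub> \<otimes>\<^bsub>padic_ints p\<^esub> x = x"
    unfolding padic_ints_simps using zp_reduced by (auto simp: mod_mult_left_eq)
next
  show "\<one>\<^bsub>padic_ints p\<^esub> \<in> carrier (padic_ints p)"
    unfolding padic_ints_simps by (rule zp_reduce_in_carrier[OF assms]) simp
qed (use assms zp_mult_in_carrier in auto)

lemma cring_padic_ints:
  assumes "p > 0"
  shows "cring (padic_ints p)"
proof (rule cringI[OF abelian_group_padic_ints[OF assms] comm_monoid_padic_ints[OF assms]])
  fix x y z
  show "(x \<oplus>\<^bsub>padic_ints p\<^esub> y) \<otimes>\<^bsub>padic_ints p\<^esub> z
      = x \<otimes>\<^bsub>padic_ints p\<^esub> z \<oplus>\<^bsub>padic_ints p\<^esub> y \<otimes>\<^bsub>padic_ints p\<^esub> z"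
    unfolding padic_ints_simps by (auto simp: mod_mult_left_eq mod_add_eq distrib_right)
qed

lemma zp_minus_eq:
  assumes "p > 0" "x \<in> carrier (padic_ints p)"
  shows "\<ominus>\<^bsub>padic_ints p\<^esub> x = (\<lambda>n. (- x n) mod int p ^ n)"
proof -
  interpret cring "padic_ints p" by (rule cring_padic_ints[OF assms(1)])
  note zp_uminus_in_carrier[OF assms]
  moreover have "(\<lambda>n. (- x n) mod int p ^ n) \<oplus>\<^bsub>padic_ints p\<^esub> x = \<zero>\<^bsub>padic_ints p\<^esub>"
    unfolding padic_ints_simps by (auto simp: mod_add_left_eq)
  ultimately show ?thesis using minus_equality[OF _ assms(2)] by simp
qed

lemma zp_pow_eq:
  assumes "p > 0"
  shows "x [^]\<^bsub>padic_ints p\<^esub> (k::nat) = (\<lambda>n. x n ^ k mod int p ^ n)"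
proof (induction k)
  case 0
  then show ?case by (simp add: padic_ints_simps)
next
  case (Suc k)
  interpret cring "padic_ints p" by (rule cring_padic_ints[OF assms])
  show ?case
    unfolding nat_pow_Suc Suc padic_ints_simps
    by (auto simp: mod_mult_left_eq mod_mult_right_eq mult.commute)
qed

lemma zp_of_int_in_carrier: "p > 0 \<Longrightarrow> zp_of_int p k \<in> carrier (padic_ints p)"
  unfolding zp_of_int_def by (rule zp_reduce_in_carrier) simp_all

lemma zp_from_unique_solutions:
  assumes "p > 0"
    and ex: "\<And>n. \<exists>y. 0 \<le> y \<and> y < int p ^ n \<and> P n y"
    and unique: "\<And>n y y'. 0 \<le> y \<Longrightarrow> y < int p ^ n \<Longrightarrow> P n y \<Longrightarrow>
      0 \<le> y' \<Longrightarrow> y' < int p ^ n \<Longrightarrow> P n y' \<Longrightarrow> y = y'"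
    and reduce: "\<And>n y. P (Suc n) y \<Longrightarrow> P n (y mod int p ^ n)"
  obtains z where "z \<in> carrier (padic_ints p)" "\<And>n. P n (z n)"
proof -
  define z where "z n = (SOME y. 0 \<le> y \<and> y < int p ^ n \<and> P n y)" for n
  have z: "0 \<le> z n" "z n < int p ^ n" "P n (z n)" for n
    unfolding z_def using someI_ex[OF ex] by blast+
  have "z (Suc n) mod int p ^ n = z n" for n
    using unique[OF _ _ reduce[OF z(3)] z(1,2,3)] assms(1) by simp
  then have "z \<in> carrier (padic_ints p)" using z unfolding zp_carrier_iff by blast
  then show ?thesis using that z(3) by blast
qed

lemma zp_UnitsI:
  assumes "prime p" "x \<in> carrier (padic_ints p)" "coprime (x 1) (int p)"
  shows "x \<in> Units (padic_ints p)"
proof -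
  have p0: "p > 0" using assms(1) prime_gt_0_nat by blast
  interpret cring "padic_ints p" by (rule cring_padic_ints[OF p0])
  have coprime_n: "coprime (x n) (int p ^ n)" for n
  proof (cases "n = 0")
    case False
    then have "x n mod int p = x 1" using zp_mod_prime[OF assms(2)] by simp
    then have "coprime (x n) (int p)" using assms(3)
      by (metis coprime_mod_left_iff of_nat_eq_0_iff p0 less_irrefl)
    then show ?thesis by simp
  qed simp
  obtain y where y: "y \<in> carrier (padic_ints p)" "\<And>n. [x n * y n = 1] (mod int p ^ n)"
  proof (rule zp_from_unique_solutions[OF p0, of "\<lambda>n y. [x n * y = 1] (mod int p ^ n)"])
    fix n
    obtain z where "[x n * z = 1] (mod int p ^ n)"
      using cong_solve_coprime_int[OF coprime_n] by blast
    then show "\<exists>y. 0 \<le> y \<and> y < int p ^ n \<and> [x n * y = 1] (mod int p ^ n)"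
      using p0 by (intro exI[of _ "z mod int p ^ n"]) (auto simp: cong_def mod_mult_right_eq)
  next
    fix n y y' assume y: "0 \<le> y" "y < int p ^ n" "[x n * y = 1] (mod int p ^ n)"
      and y': "0 \<le> y'" "y' < int p ^ n" "[x n * y' = 1] (mod int p ^ n)"
    have "[x n * y = x n * y'] (mod int p ^ n)" using cong_trans[OF y(3) cong_sym[OF y'(3)]] .
    then have "[y = y'] (mod int p ^ n)" using cong_mult_lcancel[OF coprime_n] by blast
    then show "y = y'" using y y' unfolding cong_def by simp
  next
    fix n y assume "[x (Suc n) * y = 1] (mod int p ^ Suc n)"
    then have "[x (Suc n) * y = 1] (mod int p ^ n)"
      by (rule cong_dvd_modulus) (simp add: le_imp_power_dvd)
    moreover have "[x n * (y mod int p ^ n) = x (Suc n) * y] (mod int p ^ n)"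
      using assms(2) unfolding zp_carrier_iff cong_def by (metis mod_mult_eq)
    ultimately show "[x n * (y mod int p ^ n) = 1] (mod int p ^ n)" by (rule cong_trans[rotated])
  qed (rule that)
  have "x \<otimes>\<^bsub>padic_ints p\<^esub> y = \<one>\<^bsub>padic_ints p\<^esub>"
    unfolding padic_ints_simps using y(2) unfolding cong_def by auto
  then show ?thesis
    unfolding Units_def using assms(2) y(1) m_comm[OF assms(2) y(1)] by auto
qed

lemma zp_UnitsD:
  assumes "x \<in> Units (padic_ints p)"
  shows "coprime (x 1) (int p)"
proof -
  obtain y where "x \<otimes>\<^bsub>padic_ints p\<^esub> y = \<one>\<^bsub>padic_ints p\<^esub>"
    using assms unfolding Units_def by blast
  then have "(x 1 * y 1) mod int p = 1 mod int p"
    unfolding padic_ints_simps by (metis power_one_right)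
  then have "[x 1 * y 1 = 1] (mod int p)" by (simp add: cong_def)
  then show ?thesis
    by (metis cong_imp_coprime coprime_1_left coprime_mult_left_iff cong_sym)
qed

section \<open>The Teichmueller character\<close>

lemma euler_theorem_int:
  assumes "coprime (a::int) (int m)" "m > 0"
  shows "[a ^ totient m = 1] (mod int m)"
proof -
  define b where "b = nat (a mod int m)"
  have b: "int b = a mod int m" using assms(2) unfolding b_def by simp
  then have "coprime (int b) (int m)" using assms by simp
  then have "coprime b m" by simp
  then have "[int b ^ totient m = 1] (mod int m)"
    by (metis euler_theorem cong_int_iff of_nat_1 of_nat_power)
  moreover have "[a = int b] (mod int m)" using b by (simp add: cong_def)
  ultimately show ?thesis by (meson cong_pow cong_trans)
qed

lemma fermat_little_int:
  assumes "prime p" "coprime (a::int) (int p)"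
  shows "[a ^ (p - 1) = 1] (mod int p)"
  using euler_theorem_int[OF assms(2) prime_gt_0_nat[OF assms(1)]] totient_prime[OF assms(1)]
  by simp

lemma power_prime_cong_lift:
  assumes "prime p" "k \<ge> 1" "[x = y] (mod int p ^ k)"
  shows "[x ^ p = y ^ p] (mod int p ^ Suc k)"
proof -
  obtain n where pn: "p = Suc n" using prime_gt_0_nat[OF assms(1)] by (metis gr0_conv_Suc)
  have factor: "x ^ p - y ^ p = (x - y) * (\<Sum>q<Suc n. x ^ q * y ^ (n - q))"
    unfolding pn by (rule diff_power_eq_sum)
  have "[x = y] (mod int p)"
    by (rule cong_dvd_modulus[OF assms(3)]) (use assms(2) in \<open>simp add: dvd_power\<close>)
  then have "[(\<Sum>q<Suc n. x ^ q * y ^ (n - q)) = (\<Sum>q<Suc n. y ^ q * y ^ (n - q))] (mod int p)"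
    by (intro cong_sum cong_mult cong_pow cong_refl)
  moreover have "(\<Sum>q<Suc n. y ^ q * y ^ (n - q)) = int p * y ^ n"
    using pn by (simp add: power_add[symmetric])
  ultimately have "int p dvd (\<Sum>q<Suc n. x ^ q * y ^ (n - q))"
    by (metis cong_dvd_iff dvd_triv_left)
  moreover have "int p ^ k dvd (x - y)" using assms(3) by (simp add: cong_iff_dvd_diff)
  ultimately have "int p ^ k * int p dvd (x ^ p - y ^ p)" unfolding factor
    by (simp add: mult_dvd_mono)
  then show ?thesis by (simp add: cong_iff_dvd_diff mult.commute)
qed

definition teich_spec :: "nat \<Rightarrow> int \<Rightarrow> (nat \<Rightarrow> int) \<Rightarrow> bool" where
  "teich_spec p a x \<longleftrightarrow> x \<in> carrier (padic_ints p) \<and>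
     x [^]\<^bsub>padic_ints p\<^esub> (p - 1) = \<one>\<^bsub>padic_ints p\<^esub> \<and> x 1 = a mod int p"

text \<open>The Teichmueller lift of a is the p-adic limit of the powers a^(p^n).\<close>

lemma teich_spec_exists:
  assumes "prime p" "coprime a (int p)"
  shows "teich_spec p a (\<lambda>n. a ^ (p ^ n) mod int p ^ n)"
proof -
  have p0: "p > 0" using prime_gt_0_nat[OF assms(1)] .
  have step: "[a ^ (p ^ Suc n) = a ^ (p ^ n)] (mod int p ^ Suc n)" for n
  proof (induction n)
    case 0
    have "[a ^ (p - 1) * a = 1 * a] (mod int p)"
      by (rule cong_mult[OF fermat_little_int[OF assms] cong_refl])
    then show ?case using p0 by (simp add: power_Suc2[symmetric])
  next
    case (Suc n)
    then show ?case
      using power_prime_cong_lift[OF assms(1) _ Suc] by (simp add: power_mult[symmetric] mult.commute)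
  qed
  let ?x = "\<lambda>n. a ^ (p ^ n) mod int p ^ n"
  have carrier: "?x \<in> carrier (padic_ints p)"
  proof (rule zp_reduce_in_carrier[OF p0])
    fix n
    have "[a ^ (p ^ Suc n) = a ^ (p ^ n)] (mod int p ^ n)"
      by (rule cong_dvd_modulus[OF step]) (simp add: le_imp_power_dvd)
    then show "a ^ p ^ Suc n mod int p ^ n = a ^ p ^ n mod int p ^ n" by (simp add: cong_def)
  qed
  have "?x n ^ (p - 1) mod int p ^ n = 1 mod int p ^ n" for n
  proof (cases "n = 0")
    case False
    have "p ^ n = p ^ (n - 1) * p" using False by (metis Suc_pred' neq0_conv power_Suc2)
    moreover have "totient (p ^ n) = p ^ (n - 1) * (p - 1)"
      using totient_prime_power[OF assms(1)] False by simp
    ultimately have "(a ^ totient (p ^ n)) ^ p = (a ^ (p ^ n)) ^ (p - 1)"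
      unfolding power_mult[symmetric] by (simp add: ac_simps)
    moreover have "[(a ^ totient (p ^ n)) ^ p = 1 ^ p] (mod int (p ^ n))"
      by (intro cong_pow euler_theorem_int) (use assms(2) p0 in simp_all)
    ultimately show ?thesis by (simp add: cong_def power_mod)
  qed simp
  then have "?x [^]\<^bsub>padic_ints p\<^esub> (p - 1) = \<one>\<^bsub>padic_ints p\<^esub>"
    unfolding zp_pow_eq[OF p0] padic_ints_simps by auto
  moreover have "?x 1 = a mod int p"
    using step[of 0] by (simp add: cong_def)
  ultimately show ?thesis using carrier unfolding teich_spec_def by blast
qed

text \<open>Two (p-1)-st roots of unity that agree mod p agree mod p^n, because
  x^(p-1) - y^(p-1) = (x - y) S with S \<equiv> (p-1) y^(p-2) a unit mod p.\<close>

lemma teich_spec_unique: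
  assumes "prime p" "coprime a (int p)" "teich_spec p a x" "teich_spec p a y"
  shows "x = y"
proof
  fix n
  have p0: "p > 0" and p2: "p \<ge> 2" using prime_gt_0_nat prime_ge_2_nat assms(1) by auto
  have x: "x \<in> carrier (padic_ints p)" "(\<lambda>n. x n ^ (p - 1) mod int p ^ n) = (\<lambda>n. 1 mod int p ^ n)"
    and y: "y \<in> carrier (padic_ints p)" "(\<lambda>n. y n ^ (p - 1) mod int p ^ n) = (\<lambda>n. 1 mod int p ^ n)"
    and xy1: "x 1 = y 1" "x 1 = a mod int p"
    using assms(3,4) unfolding teich_spec_def zp_pow_eq[OF p0] padic_ints_simps by auto
  have reduced: "x n mod int p ^ n = x n" "y n mod int p ^ n = y n"
    using zp_mod_prime_power x(1) y(1) by blast+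
  show "x n = y n"
  proof (cases "n = 0")
    case True
    then show ?thesis using reduced by simp
  next
    case False
    have "[x n ^ (p - 1) = y n ^ (p - 1)] (mod int p ^ n)"
      using fun_cong[OF x(2), of n] fun_cong[OF y(2), of n] by (simp add: cong_def)
    have residues: "x n mod int p = x 1" "y n mod int p = y 1"
      using zp_mod_prime x(1) y(1) False by auto
    then have xy_mod_p: "[x n = y n] (mod int p)" using xy1 by (simp add: cong_def)
    have "coprime (y n mod int p) (int p)" using residues xy1 assms(2) p0 by simp
    then have coprime_y: "coprime (y n) (int p)" using p0 by simp
    define S where "S = (\<Sum>q<Suc (p - 2). x n ^ q * y n ^ (p - 2 - q))"
    have factor: "x n ^ (p - 1) - y n ^ (p - 1) = (x n - y n) * S"
      unfolding S_def using diff_power_eq_sum[of "x n" "p - 2" "y n"] p2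
      by (simp add: Suc_diff_Suc numeral_2_eq_2)
    have "[S = (\<Sum>q<Suc (p - 2). y n ^ q * y n ^ (p - 2 - q))] (mod int p)"
      unfolding S_def by (intro cong_sum cong_mult cong_pow xy_mod_p cong_refl)
    also have "(\<Sum>q<Suc (p - 2). y n ^ q * y n ^ (p - 2 - q)) = (int p - 1) * y n ^ (p - 2)"
      using p2 by (simp add: power_add[symmetric] of_nat_diff)
    finally have "coprime S (int p)"
      using cong_imp_coprime[OF cong_sym] coprime_y coprime_diff_one_left[of "int p"] by fastforce
    moreover have "int p ^ n dvd (x n - y n) * S"
      using \<open>[x n ^ (p - 1) = y n ^ (p - 1)] (mod int p ^ n)\<close> factor
      by (simp add: cong_iff_dvd_diff)
    ultimately have "int p ^ n dvd (x n - y n)"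
      by (simp add: coprime_commute coprime_dvd_mult_left_iff)
    then show ?thesis using reduced by (metis mod_eq_dvd_iff)
  qed
qed

lemma teich_spec_teichmuller:
  assumes "prime p" "coprime a (int p)"
  shows "teich_spec p a (teichmuller p a)"
proof -
  have "teichmuller p a = (THE x. teich_spec p a x)"
    using assms(2) unfolding teichmuller_def teich_spec_def by simp
  moreover have "teich_spec p a (THE x. teich_spec p a x)"
    by (rule theI[of "teich_spec p a", OF teich_spec_exists[OF assms]])
      (use teich_spec_unique[OF assms] teich_spec_exists[OF assms] in blast)
  ultimately show ?thesis by simp
qed

lemma teichmuller_eqI:
  assumes "prime p" "coprime a (int p)" "teich_spec p a x"
  shows "teichmuller p a = x"
  using teich_spec_unique[OF assms(1,2) teich_spec_teichmuller[OF assms(1,2)] assms(3)] .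

lemma
  assumes "prime p" "coprime a (int p)"
  shows teichmuller_in_carrier: "teichmuller p a \<in> carrier (padic_ints p)"
    and teichmuller_pow_p_minus_1: "teichmuller p a [^]\<^bsub>padic_ints p\<^esub> (p - 1) = \<one>\<^bsub>padic_ints p\<^esub>"
    and teichmuller_mod_p: "teichmuller p a 1 = a mod int p"
  using teich_spec_teichmuller[OF assms] unfolding teich_spec_def by blast+

lemma teichmuller_cong:
  assumes "[a = b] (mod int p)"
  shows "teichmuller p a = teichmuller p b"
proof -
  have "coprime a (int p) \<longleftrightarrow> coprime b (int p)" using assms cong_imp_coprime cong_sym by blast
  moreover have "a mod int p = b mod int p" using assms by (simp add: cong_def)
  ultimately show ?thesis unfolding teichmuller_def by simp
qed

lemma teichmuller_mult:
  assumes "prime p" "coprime a (int p)" "coprime b (int p)"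
  shows "teichmuller p (a * b) = teichmuller p a \<otimes>\<^bsub>padic_ints p\<^esub> teichmuller p b"
proof (rule teichmuller_eqI[OF assms(1)])
  interpret cring "padic_ints p" by (rule cring_padic_ints[OF prime_gt_0_nat[OF assms(1)]])
  show "coprime (a * b) (int p)" using assms by simp
  have carrier: "teichmuller p a \<in> carrier (padic_ints p)" "teichmuller p b \<in> carrier (padic_ints p)"
    using teichmuller_in_carrier assms by blast+
  show "teich_spec p (a * b) (teichmuller p a \<otimes>\<^bsub>padic_ints p\<^esub> teichmuller p b)"
    unfolding teich_spec_def
  proof (intro conjI)
    show "(teichmuller p a \<otimes>\<^bsub>padic_ints p\<^esub> teichmuller p b) [^]\<^bsub>padic_ints p\<^esub> (p - 1)
        = \<one>\<^bsub>padic_ints p\<^esub>"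
      using carrier teichmuller_pow_p_minus_1[OF assms(1,2)] teichmuller_pow_p_minus_1[OF assms(1,3)]
      by (simp add: nat_pow_distrib)
    show "(teichmuller p a \<otimes>\<^bsub>padic_ints p\<^esub> teichmuller p b) 1 = a * b mod int p"
      using teichmuller_mod_p[OF assms(1,2)] teichmuller_mod_p[OF assms(1,3)]
      by (simp add: padic_ints_simps mod_mult_eq)
  qed (use carrier in simp)
qed

lemma teichmuller_one:
  assumes "prime p"
  shows "teichmuller p 1 = \<one>\<^bsub>padic_ints p\<^esub>"
proof (rule teichmuller_eqI[OF assms])
  interpret cring "padic_ints p" by (rule cring_padic_ints[OF prime_gt_0_nat[OF assms]])
  have "\<one>\<^bsub>padic_ints p\<^esub> 1 = 1 mod int p" by (simp add: padic_ints_simps)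
  then show "teich_spec p 1 \<one>\<^bsub>padic_ints p\<^esub>"
    unfolding teich_spec_def by simp
qed simp

section \<open>Power sums modulo p\<close>

lemma power_sum_mod_prime_dvd:
  assumes "prime p" "n > 0" "(p - 1) dvd n"
  shows "[(\<Sum>t<p. int t ^ n) = -1] (mod int p)"
proof -
  have p1: "p > 1" using prime_gt_1_nat[OF assms(1)] .
  obtain q where q: "n = (p - 1) * q" using assms(3) by blast
  have one: "[int t ^ n = 1] (mod int p)" if "t \<in> {1..<p}" for t
  proof -
    have "coprime (int t) (int p)"
      using that assms(1) by (simp add: coprime_commute prime_imp_coprime_nat nat_dvd_not_less)
    then have "[(int t ^ (p - 1)) ^ q = 1 ^ q] (mod int p)"
      by (intro cong_pow fermat_little_int[OF assms(1)])
    then show ?thesis unfolding q by (simp add: power_mult)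
  qed
  have "{..<p} = insert 0 {1..<p}" using p1 by auto
  then have "(\<Sum>t<p. int t ^ n) = (\<Sum>t\<in>{1..<p}. int t ^ n)"
    using assms(2) by simp
  also have "[\<dots> = (\<Sum>t\<in>{1..<p}. 1)] (mod int p)"
    using one by (rule cong_sum)
  also have "(\<Sum>t\<in>{1..<p}. 1 :: int) = int p - 1" using p1 by simp
  also have "[int p - 1 = -1] (mod int p)" by (simp add: cong_iff_dvd_diff)
  finally show ?thesis .
qed

text \<open>Multiplication by a primitive root g permutes the residues, so the sum S satisfies
  g^n S \<equiv> S with g^n \<not>\<equiv> 1.\<close>

lemma power_sum_mod_prime_not_dvd:
  assumes "prime p" "\<not> (p - 1) dvd n"
  shows "[(\<Sum>t<p. int t ^ n) = 0] (mod int p)"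
proof -
  have p1: "p > 1" using prime_gt_1_nat[OF assms(1)] .
  obtain g where g: "residue_primroot p g" using prime_primitive_root_exists[OF p1 assms(1)] by blast
  have "ord p g = p - 1" using g totient_prime[OF assms(1)] unfolding residue_primroot_def by simp
  then have "\<not> [g ^ n = 1] (mod p)" using assms(2) ord_divides by metis
  then have not_one: "\<not> int p dvd (int g ^ n - 1)"
    by (metis cong_iff_dvd_diff cong_int_iff of_nat_1 of_nat_power)
  have cg: "coprime g p" using g unfolding residue_primroot_def by (simp add: coprime_commute)
  define S where "S = (\<Sum>t<p. int t ^ n)"
  have "inj_on (\<lambda>t. g * t mod p) {..<p}"
  proof (rule inj_onI)
    fix a b assume "a \<in> {..<p}" "b \<in> {..<p}" "g * a mod p = g * b mod p"
    then show "a = b"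
      using cong_mult_lcancel_nat[of g p a b] cg by (simp add: cong_def coprime_commute)
  qed
  moreover have "(\<lambda>t. g * t mod p) ` {..<p} \<subseteq> {..<p}" using p1 by auto
  ultimately have "bij_betw (\<lambda>t. g * t mod p) {..<p} {..<p}"
    using endo_inj_surj unfolding bij_betw_def by (metis finite_lessThan)
  then have "S = (\<Sum>t<p. int (g * t mod p) ^ n)"
    unfolding S_def by (rule sum.reindex_bij_betw[symmetric])
  also have "[\<dots> = (\<Sum>t<p. int g ^ n * int t ^ n)] (mod int p)"
  proof (rule cong_sum)
    fix t
    have "[int (g * t mod p) = int g * int t] (mod int p)" by (simp add: cong_def of_nat_mod)
    then show "[int (g * t mod p) ^ n = int g ^ n * int t ^ n] (mod int p)"
      using cong_pow power_mult_distrib by metis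
  qed
  also have "(\<Sum>t<p. int g ^ n * int t ^ n) = int g ^ n * S"
    unfolding S_def by (simp add: sum_distrib_left)
  finally have "int p dvd (int g ^ n - 1) * S"
    by (simp add: cong_iff_dvd_diff algebra_simps dvd_diff_commute)
  then have "int p dvd S"
    using not_one assms(1) prime_dvd_mult_iff[of "int p"] by simp
  then show ?thesis unfolding S_def by (simp add: cong_0_iff)
qed

lemma power_sum_mod_prime:
  assumes "prime p" "n > 0"
  shows "[(\<Sum>t<p. int t ^ n) = (if (p - 1) dvd n then -1 else 0)] (mod int p)"
  using power_sum_mod_prime_dvd[OF assms] power_sum_mod_prime_not_dvd[OF assms(1)] by simp

text \<open>Expanding (1+t)^B binomially, only the exponent A + j = p - 1 survives, since
  0 < A + j < 2(p - 1).\<close>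

lemma binomial_power_sum_mod_prime:
  assumes "prime p" "A \<ge> 1" "A + B \<le> 2 * p - 3"
  shows "[(\<Sum>t<p. int t ^ A * (1 + int t) ^ B) =
     - (if A \<le> p - 1 \<and> p - 1 - A \<le> B then int (B choose (p - 1 - A)) else 0)] (mod int p)"
proof -
  have p2: "p \<ge> 2" using prime_ge_2_nat[OF assms(1)] .
  have exponent: "(p - 1) dvd (A + j) \<longleftrightarrow> j = p - 1 - A \<and> A \<le> p - 1" if "j \<le> B" for j
  proof
    assume "(p - 1) dvd (A + j)"
    then obtain q where q: "A + j = (p - 1) * q" by blast
    then have "q \<noteq> 0" using assms(2) by (intro notI) simp
    moreover have "q < 2" using q that assms(3) p2 mult_le_mono2[of 2 q "p - 1"] by linarith
    ultimately have "A + j = p - 1" using q by simp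
    then show "j = p - 1 - A \<and> A \<le> p - 1" by auto
  next
    assume "j = p - 1 - A \<and> A \<le> p - 1"
    then have "A + j = p - 1" by auto
    then show "(p - 1) dvd (A + j)" by simp
  qed
  have "int t ^ A * (1 + int t) ^ B = (\<Sum>j\<le>B. int (B choose j) * int t ^ (A + j))" for t
    using binomial_ring[of "int t" 1 B]
    by (simp add: add.commute sum_distrib_left power_add algebra_simps)
  then have "(\<Sum>t<p. int t ^ A * (1 + int t) ^ B) = (\<Sum>t<p. \<Sum>j\<le>B. int (B choose j) * int t ^ (A + j))"
    by simp
  also have "\<dots> = (\<Sum>j\<le>B. int (B choose j) * (\<Sum>t<p. int t ^ (A + j)))"
    by (subst sum.swap) (simp add: sum_distrib_left)
  also have "[\<dots> = (\<Sum>j\<le>B. int (B choose j) * (if (p - 1) dvd (A + j) then -1 else 0))] (mod int p)"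
    by (intro cong_sum cong_mult cong_refl power_sum_mod_prime[OF assms(1)]) (use assms(2) in simp)
  also have "(\<Sum>j\<le>B. int (B choose j) * (if (p - 1) dvd (A + j) then -1 else 0))
      = (\<Sum>j\<le>B. if j = p - 1 - A \<and> A \<le> p - 1 then - int (B choose j) else 0)"
    using exponent by (intro sum.cong refl) simp
  also have "\<dots> = - (if A \<le> p - 1 \<and> p - 1 - A \<le> B then int (B choose (p - 1 - A)) else 0)"
    by (cases "A \<le> p - 1") (simp_all add: sum.delta)
  finally show ?thesis .
qed

text \<open>gap_poly e t s is the reduction mod p of the difference of the coefficients of
  \<alpha>(\<omega>^2) and \<alpha>(\<omega>^e) in the three-term relation with parameters t and s = t + 1.\<close>

definition gap_poly :: "nat \<Rightarrow> int \<Rightarrow> int \<Rightarrow> int" where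
  "gap_poly e t s = t ^ e - s ^ e - t ^ e * s ^ 2 - (t ^ 2 - s ^ 2 - t ^ 2 * s ^ e)"

lemma gap_poly_cong:
  "[t = t'] (mod m) \<Longrightarrow> [s = s'] (mod m) \<Longrightarrow> [gap_poly e t s = gap_poly e t' s'] (mod m)"
  unfolding gap_poly_def by (intro cong_diff cong_mult cong_pow) auto

lemma weighted_gap_poly_sum_mod_prime:
  assumes "prime p" "4 \<le> e" "e + 3 \<le> p"
  shows "[(\<Sum>t<p. int t ^ (p - 2 - e) * gap_poly e (int t) (1 + int t)) = 2 - int e] (mod int p)"
proof -
  have p7: "p \<ge> 7" using assms by simp
  define E where "E = p - 2 - e"
  have E: "E \<ge> 1" "E + e = p - 2" "E + 2 = p - e" unfolding E_def using assms by auto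
  define L where "L A B = (\<Sum>t<p. int t ^ A * (1 + int t) ^ B)" for A B
  have "(\<Sum>t<p. int t ^ E * gap_poly e (int t) (1 + int t))
      = L (E + e) 0 - L E e - L (E + e) 2 - L (E + 2) 0 + L E 2 + L (E + 2) e"
    unfolding L_def gap_poly_def
    by (simp add: sum_subtractf sum.distrib power_add power2_eq_square algebra_simps)
  also have "[\<dots> = 0 - 0 - (-2) - 0 + 0 + (- int e)] (mod int p)"
  proof -
    have l1: "[L (E + e) 0 = 0] (mod int p)"
      using binomial_power_sum_mod_prime[OF assms(1), of "p - 2" 0] p7 unfolding L_def E by simp
    have l2: "[L E e = 0] (mod int p)"
      using binomial_power_sum_mod_prime[OF assms(1), of E e] E assms unfolding L_def E_def by simp
    have l3: "[L (E + e) 2 = -2] (mod int p)"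
    proof -
      have "p - 1 - (p - 2) = 1" "1 \<le> p - 2" "p - 2 + 2 \<le> 2 * p - 3" "p - 2 \<le> p - 1"
        using p7 by auto
      then show ?thesis
        using binomial_power_sum_mod_prime[OF assms(1), of "p - 2" 2] unfolding L_def E by simp
    qed
    have l4: "[L (E + 2) 0 = 0] (mod int p)"
      using binomial_power_sum_mod_prime[OF assms(1), of "p - e" 0] p7 assms unfolding L_def E by simp
    have l5: "[L E 2 = 0] (mod int p)"
      using binomial_power_sum_mod_prime[OF assms(1), of E 2] E assms unfolding L_def E_def by simp
    have l6: "[L (E + 2) e = - int e] (mod int p)"
    proof -
      have "e choose (e - 1) = e choose (e - (e - 1))" by (rule binomial_symmetric) simp
      then have "e choose (e - 1) = e" using assms(2) by simp
      moreover have "p - 1 - (p - e) = e - 1" "1 \<le> p - e" "p - e + e \<le> 2 * p - 3" "p - e \<le> p - 1"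
        "e - 1 \<le> e" using p7 assms by auto
      ultimately show ?thesis
        using binomial_power_sum_mod_prime[OF assms(1), of "p - e" e] unfolding L_def E by simp
    qed
    show ?thesis by (intro cong_add cong_diff l1 l2 l3 l4 l5 l6)
  qed
  finally show ?thesis unfolding E_def by simp
qed

text \<open>If gap_poly e t (t + 1) vanished mod p for all t, so would the weighted sum of the
  previous lemma, since the remaining residues t = 0 and t = -1 are roots.\<close>

lemma exists_gap_poly_not_dvd:
  assumes "prime p" "even e" "4 \<le> e" "e + 3 \<le> p"
  shows "\<exists>t::int. 1 \<le> t \<and> t \<le> int p - 2 \<and> \<not> int p dvd gap_poly e t (t + 1)"
proof (rule ccontr)
  assume no_t: "\<not> ?thesis"
  have p7: "p \<ge> 7" using assms by simp
  have all_t: "int p dvd int t ^ (p - 2 - e) * gap_poly e (int t) (1 + int t)" if t: "t < p" for t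
  proof -
    consider "t = 0" | "t = p - 1" | "1 \<le> t" "t \<le> p - 2" using t by arith
    then show ?thesis
    proof cases
      case 1
      then show ?thesis using assms(3) by (simp add: gap_poly_def zero_power)
    next
      case 2
      then have "[gap_poly e (int t) (1 + int t) = gap_poly e (-1) 0] (mod int p)"
        using p7 by (intro gap_poly_cong) (simp_all add: cong_iff_dvd_diff of_nat_diff)
      moreover have "gap_poly e (-1) 0 = 0" unfolding gap_poly_def using assms(2,3) by simp
      ultimately show ?thesis by (simp add: cong_0_iff)
    next
      case 3
      then have "1 \<le> int t" "int t \<le> int p - 2" using p7 by (simp_all add: of_nat_diff)
      then have "int p dvd gap_poly e (int t) (int t + 1)" using no_t by blast
      then show ?thesis by (simp add: add.commute)
    qed
  qed
  have "[(\<Sum>t<p. int t ^ (p - 2 - e) * gap_poly e (int t) (1 + int t)) = 0] (mod int p)"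
    unfolding cong_0_iff by (intro dvd_sum all_t) simp
  then have "[2 - int e = 0] (mod int p)"
    by (rule cong_trans[OF cong_sym[OF weighted_gap_poly_sum_mod_prime[OF assms(1,3,4)]]])
  then have "int p dvd (int e - 2)" by (simp add: cong_0_iff dvd_diff_commute)
  moreover have "0 < int e - 2" "int e - 2 < int p" using assms by auto
  ultimately show False using zdvd_imp_le by fastforce
qed

locale odd_prime =
  fixes p :: nat
  assumes prime: "prime p" and odd: "odd p"
begin

abbreviation Zp :: "(nat \<Rightarrow> int) ring" where "Zp \<equiv> padic_ints p"

lemma p_pos: "p > 0" using prime_gt_0_nat[OF prime] .
lemma p_ge_3: "p \<ge> 3" using prime_ge_2_nat[OF prime] odd by (cases "p = 2") auto
lemma prime_int_p: "prime (int p)" using prime by simp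

sublocale Zp: cring Zp by (rule cring_padic_ints[OF p_pos])

lemma coprime_p_iff_not_dvd: "coprime x (int p) \<longleftrightarrow> \<not> int p dvd x"
  using prime_imp_coprime[OF prime_int_p] by (metis coprime_commute coprime_absorb_left
      prime_int_p not_prime_unit)

text \<open>The integer exponent is taken mod p - 1, the order of every Teichmueller value.\<close>

definition teich_pow :: "int \<Rightarrow> int \<Rightarrow> nat \<Rightarrow> int" where
  "teich_pow x k = teichmuller p x [^]\<^bsub>Zp\<^esub> nat (k mod int (p - 1))"

lemma teich_pow_in_carrier: "coprime x (int p) \<Longrightarrow> teich_pow x k \<in> carrier Zp"
  unfolding teich_pow_def using teichmuller_in_carrier[OF prime] by simp

lemma teich_pow_of_nat:
  assumes "coprime x (int p)"
  shows "teich_pow x (int n) = teichmuller p x [^]\<^bsub>Zp\<^esub> n"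
proof -
  let ?w = "teichmuller p x"
  have w: "?w \<in> carrier Zp" using teichmuller_in_carrier[OF prime assms] .
  have "?w [^]\<^bsub>Zp\<^esub> n = ?w [^]\<^bsub>Zp\<^esub> ((p - 1) * (n div (p - 1)))
      \<otimes>\<^bsub>Zp\<^esub> ?w [^]\<^bsub>Zp\<^esub> (n mod (p - 1))"
    using Zp.nat_pow_mult[OF w] by simp
  also have "?w [^]\<^bsub>Zp\<^esub> ((p - 1) * (n div (p - 1))) = \<one>\<^bsub>Zp\<^esub>"
    using Zp.nat_pow_pow[OF w, symmetric] teichmuller_pow_p_minus_1[OF prime assms] by simp
  finally show ?thesis
    unfolding teich_pow_def using w by (simp add: nat_int of_nat_mod[symmetric] del: of_nat_mod)
qed

lemma teich_pow_exp_cong: "[k = l] (mod int (p - 1)) \<Longrightarrow> teich_pow x k = teich_pow x l"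
  unfolding teich_pow_def cong_def by simp

lemma teich_pow_add:
  assumes "coprime x (int p)"
  shows "teich_pow x k \<otimes>\<^bsub>Zp\<^esub> teich_pow x l = teich_pow x (k + l)"
proof -
  have nonneg: "0 \<le> k mod int (p - 1)" "0 \<le> l mod int (p - 1)" using p_ge_3 by simp_all
  have "teich_pow x k \<otimes>\<^bsub>Zp\<^esub> teich_pow x l
      = teichmuller p x [^]\<^bsub>Zp\<^esub> (nat (k mod int (p - 1)) + nat (l mod int (p - 1)))"
    unfolding teich_pow_def using Zp.nat_pow_mult teichmuller_in_carrier[OF prime assms] by simp
  also have "\<dots> = teich_pow x (int (nat (k mod int (p - 1)) + nat (l mod int (p - 1))))"
    by (rule teich_pow_of_nat[OF assms, symmetric])
  also have "\<dots> = teich_pow x (k + l)"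
    by (rule teich_pow_exp_cong) (use nonneg in \<open>simp add: cong_def mod_add_eq\<close>)
  finally show ?thesis .
qed

lemma teich_pow_zero: "coprime x (int p) \<Longrightarrow> teich_pow x 0 = \<one>\<^bsub>Zp\<^esub>"
  unfolding teich_pow_def by simp

lemma teich_pow_inverse:
  "coprime x (int p) \<Longrightarrow> teich_pow x k \<otimes>\<^bsub>Zp\<^esub> teich_pow x (- k) = \<one>\<^bsub>Zp\<^esub>"
  using teich_pow_add[of x k "- k"] teich_pow_zero by simp

lemma teich_pow_in_Units: "coprime x (int p) \<Longrightarrow> teich_pow x k \<in> Units Zp"
  unfolding Units_def using teich_pow_in_carrier teich_pow_inverse[of x k]
    teich_pow_inverse[of x "- k"] by fastforce

lemma inv_teich_pow: "coprime x (int p) \<Longrightarrow> inv\<^bsub>Zp\<^esub> (teich_pow x k) = teich_pow x (- k)"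
  using Zp.inv_unique'[OF teich_pow_in_carrier teich_pow_in_carrier teich_pow_inverse]
    teich_pow_inverse[of x "- k"] by simp

lemma teich_pow_mult:
  assumes "coprime x (int p)" "coprime y (int p)"
  shows "teich_pow (x * y) k = teich_pow x k \<otimes>\<^bsub>Zp\<^esub> teich_pow y k"
  unfolding teich_pow_def teichmuller_mult[OF prime assms]
  by (rule Zp.nat_pow_distrib) (use teichmuller_in_carrier[OF prime] assms in auto)

lemma teich_pow_cong: "[x = y] (mod int p) \<Longrightarrow> teich_pow x k = teich_pow y k"
  unfolding teich_pow_def using teichmuller_cong by metis

lemma teich_pow_one: "teich_pow 1 k = \<one>\<^bsub>Zp\<^esub>"
  unfolding teich_pow_def teichmuller_one[OF prime] by simp

lemma teich_pow_power:
  assumes "coprime x (int p)"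
  shows "teich_pow (x ^ n) k = teich_pow x (int n * k)"
proof (induction n)
  case 0
  then show ?case using teich_pow_one teich_pow_zero[OF assms] by simp
next
  case (Suc n)
  have "teich_pow (x ^ Suc n) k = teich_pow x k \<otimes>\<^bsub>Zp\<^esub> teich_pow (x ^ n) k"
    using teich_pow_mult[OF assms, of "x ^ n"] assms by simp
  also have "\<dots> = teich_pow x (k + int n * k)" using Suc teich_pow_add[OF assms] by simp
  finally show ?case by (simp add: algebra_simps)
qed

lemma teich_pow_minus_one_even: "teich_pow (-1) (2 * j) = \<one>\<^bsub>Zp\<^esub>"
  using teich_pow_power[of "-1" 2 j] teich_pow_one by simp

lemma teich_pow_nat_pow:
  assumes "coprime x (int p)"
  shows "teich_pow x k [^]\<^bsub>Zp\<^esub> (n::nat) = teich_pow x (int n * k)"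
proof (induction n)
  case 0
  then show ?case using teich_pow_zero[OF assms] by simp
next
  case (Suc n)
  then show ?case using teich_pow_add[OF assms, of "int n * k" k] by (simp add: algebra_simps)
qed

lemma teich_pow_mod_p:
  assumes "coprime x (int p)" "0 \<le> k" "k < int (p - 1)"
  shows "teich_pow x k 1 = x ^ nat k mod int p"
proof -
  have "teich_pow x k 1 = teichmuller p x 1 ^ nat k mod int p"
    unfolding teich_pow_def zp_pow_eq[OF p_pos] using assms(2,3) by simp
  then show ?thesis using teichmuller_mod_p[OF prime assms(1)] by (simp add: power_mod)
qed

lemma teich_pow_mod_p_cong:
  assumes "coprime x (int p)" "[k = j] (mod int (p - 1))" "0 \<le> j" "j < int (p - 1)"
  shows "[teich_pow x k 1 = x ^ nat j] (mod int p)"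
  using teich_pow_exp_cong[OF assms(2)] teich_pow_mod_p[OF assms(1,3,4)] by (simp add: cong_def)

lemma zp_of_int_in_Units: "coprime k (int p) \<Longrightarrow> zp_of_int p k \<in> Units Zp"
  using zp_UnitsI[OF prime zp_of_int_in_carrier[OF p_pos]] p_pos by (simp add: zp_of_int_def)

lemma one_plus_one_in_Units: "\<one>\<^bsub>Zp\<^esub> \<oplus>\<^bsub>Zp\<^esub> \<one>\<^bsub>Zp\<^esub> \<in> Units Zp"
proof -
  have "coprime (2::int) (int p)"
    using coprime_p_iff_not_dvd p_ge_3 zdvd_imp_le[of "int p" 2] by force
  moreover have "\<one>\<^bsub>Zp\<^esub> \<oplus>\<^bsub>Zp\<^esub> \<one>\<^bsub>Zp\<^esub> = zp_of_int p 2"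
    unfolding zp_of_int_def padic_ints_simps by (auto simp: mod_add_eq mod_mult_right_eq)
  ultimately show ?thesis using zp_of_int_in_Units by simp
qed

lemma zp_mult_mod_p: "[(x \<otimes>\<^bsub>Zp\<^esub> y) 1 = x 1 * y 1] (mod int p)"
  by (simp add: padic_ints_simps cong_def)

lemma zp_minus_mod_p:
  assumes "y \<in> carrier Zp"
  shows "[(x \<ominus>\<^bsub>Zp\<^esub> y) 1 = x 1 - y 1] (mod int p)"
  unfolding Zp.minus_eq zp_minus_eq[OF p_pos assms]
  by (simp add: padic_ints_simps cong_def mod_add_right_eq)

lemma teichmuller_minus_one_in_Units:
  assumes "coprime x (int p)" "\<not> [x = 1] (mod int p)"
  shows "teichmuller p x \<ominus>\<^bsub>Zp\<^esub> \<one>\<^bsub>Zp\<^esub> \<in> Units Zp"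
proof (rule zp_UnitsI[OF prime])
  show "teichmuller p x \<ominus>\<^bsub>Zp\<^esub> \<one>\<^bsub>Zp\<^esub> \<in> carrier Zp"
    using teichmuller_in_carrier[OF prime assms(1)] by simp
  have "[(teichmuller p x \<ominus>\<^bsub>Zp\<^esub> \<one>\<^bsub>Zp\<^esub>) 1 = x - 1] (mod int p)"
    using zp_minus_mod_p[OF Zp.one_closed, of "teichmuller p x"]
      teichmuller_mod_p[OF prime assms(1)] p_ge_3
    by (simp add: padic_ints_simps cong_def mod_diff_left_eq)
  moreover have "coprime (x - 1) (int p)"
    using assms(2) coprime_p_iff_not_dvd by (simp add: cong_iff_dvd_diff)
  ultimately show "coprime ((teichmuller p x \<ominus>\<^bsub>Zp\<^esub> \<one>\<^bsub>Zp\<^esub>) 1) (int p)"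
    using cong_imp_coprime cong_sym by blast
qed

section \<open>Characters modulo p\<close>

definition teich_char :: "int \<Rightarrow> int \<Rightarrow> nat \<Rightarrow> int" where
  "teich_char k = (\<lambda>a. if coprime a (int p) then teich_pow a k else \<zero>\<^bsub>Zp\<^esub>)"

lemma is_char_teich_char: "is_char p p (teich_char k)"
  unfolding is_char_def
proof (intro conjI allI impI)
  fix a b :: int assume "[a = b] (mod int p)"
  then show "teich_char k a = teich_char k b"
    unfolding teich_char_def using cong_imp_coprime cong_sym teich_pow_cong by metis
qed (simp_all add: teich_char_def teich_pow_in_Units teich_pow_mult)

lemma teich_char_in_char_group: "teich_char k \<in> char_group p p"
  unfolding char_group_def using is_char_teich_char by simp

lemma teich_char_exp_cong: "[k = l] (mod int (p - 1)) \<Longrightarrow> teich_char k = teich_char l"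
  unfolding teich_char_def using teich_pow_exp_cong by (auto intro!: ext)

lemma char_inv_teich_char: "char_inv p p (teich_char k) = teich_char (- k)"
  unfolding char_inv_def teich_char_def using inv_teich_pow by (auto intro!: ext)

lemma char_mult_teich_char: "char_mult p p (teich_char k) (teich_char l) = teich_char (k + l)"
  unfolding char_mult_def teich_char_def using teich_pow_add by (auto intro!: ext)

lemma teichmuller_squared: "char_mult p p (teichmuller p) (teichmuller p) = teich_char 2"
proof
  fix a
  show "char_mult p p (teichmuller p) (teichmuller p) a = teich_char 2 a"
  proof (cases "coprime a (int p)")
    case True
    have "teich_pow a (int 2) = teichmuller p a [^]\<^bsub>Zp\<^esub> (2::nat)"
      by (rule teich_pow_of_nat[OF True])
    then show ?thesis
      unfolding char_mult_def teich_char_def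
      using True teichmuller_in_carrier[OF prime True] by (simp add: numeral_2_eq_2)
  qed (simp add: char_mult_def teich_char_def)
qed

lemma primitive_root_int:
  obtains g :: int where "coprime g (int p)"
    "\<And>a. coprime a (int p) \<Longrightarrow> \<exists>i<p - 1. [g ^ i = a] (mod int p)"
    "\<And>i j. i < p - 1 \<Longrightarrow> j < p - 1 \<Longrightarrow> [g ^ i = g ^ j] (mod int p) \<Longrightarrow> i = j"
proof -
  have p1: "p > 1" using p_ge_3 by simp
  obtain g where g: "residue_primroot p g" using prime_primitive_root_exists[OF p1 prime] by blast
  have bij: "bij_betw (\<lambda>i. g ^ i mod p) {..<p - 1} (totatives p)"
    using residue_primroot_is_generator[OF p1 g] totient_prime[OF prime] by simp
  show ?thesis
  proof (rule that[of "int g"])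
    show "coprime (int g) (int p)"
      using g unfolding residue_primroot_def by (simp add: coprime_commute)
  next
    fix a :: int assume a: "coprime a (int p)"
    define b where "b = nat (a mod int p)"
    have b: "int b = a mod int p" unfolding b_def using p_pos by simp
    have "coprime (int b) (int p)" using b a p_pos by simp
    then have coprime_b: "coprime b p" by simp
    have "b \<noteq> 0" using coprime_b p1 by (intro notI) simp
    moreover have "int b < int p" using b p_pos by simp
    then have "b \<le> p" by simp
    ultimately have "b \<in> (\<lambda>i. g ^ i mod p) ` {..<p - 1}"
      using bij coprime_b unfolding bij_betw_def totatives_def by auto
    then obtain i where i: "i < p - 1" "g ^ i mod p = b" by auto
    have "int (g ^ i mod p) = int g ^ i mod int p" by (simp add: of_nat_mod)
    then have "int g ^ i mod int p = a mod int p" using i(2) b by simp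
    then show "\<exists>i<p - 1. [int g ^ i = a] (mod int p)" using i(1) by (auto simp: cong_def)
  next
    fix i j assume ij: "i < p - 1" "j < p - 1" "[int g ^ i = int g ^ j] (mod int p)"
    then have "[g ^ i = g ^ j] (mod p)" by (simp add: cong_int_iff[symmetric])
    then show "i = j" using bij ij unfolding bij_betw_def inj_on_def by (auto simp: cong_def)
  qed
qed

lemma char_one:
  assumes "is_char p p \<chi>"
  shows "\<chi> 1 = \<one>\<^bsub>Zp\<^esub>"
proof -
  have u: "\<chi> 1 \<in> Units Zp" and "\<chi> (1 * 1) = \<chi> 1 \<otimes>\<^bsub>Zp\<^esub> \<chi> 1"
    using assms unfolding is_char_def by (simp, meson coprime_1_left)
  then have "\<chi> 1 \<otimes>\<^bsub>Zp\<^esub> \<one>\<^bsub>Zp\<^esub> = \<chi> 1 \<otimes>\<^bsub>Zp\<^esub> \<chi> 1" by auto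
  then show ?thesis using Zp.Units_l_cancel[OF u Zp.one_closed] u by auto
qed

lemma char_power:
  assumes "is_char p p \<chi>" "coprime a (int p)"
  shows "\<chi> (a ^ n) = \<chi> a [^]\<^bsub>Zp\<^esub> n"
proof (induction n)
  case 0
  then show ?case using char_one[OF assms(1)] by simp
next
  case (Suc n)
  have "\<chi> (a ^ n * a) = \<chi> (a ^ n) \<otimes>\<^bsub>Zp\<^esub> \<chi> a"
    using assms unfolding is_char_def by simp
  then show ?case using Suc by (simp add: mult.commute)
qed

lemma char_eq_teichmuller_of_residue:
  assumes "is_char p p \<chi>" "coprime a (int p)"
  shows "\<chi> a = teichmuller p (\<chi> a 1)"
proof -
  have unit: "\<chi> a \<in> Units Zp" using assms unfolding is_char_def by blast
  have "\<chi> (a ^ (p - 1)) = \<chi> 1"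
    using assms(1) fermat_little_int[OF prime assms(2)] unfolding is_char_def by blast
  then have "\<chi> a [^]\<^bsub>Zp\<^esub> (p - 1) = \<one>\<^bsub>Zp\<^esub>"
    using char_power[OF assms] char_one[OF assms(1)] by simp
  moreover have "0 \<le> \<chi> a 1" "\<chi> a 1 < int p"
    using Zp.Units_closed[OF unit] zp_carrier_iff by (metis power_one_right)+
  ultimately show ?thesis
    using unit by (intro teichmuller_eqI[OF prime zp_UnitsD[OF unit], symmetric])
      (auto simp: teich_spec_def)
qed

lemma char_eq_teich_char:
  assumes "is_char p p \<chi>"
  obtains m where "0 \<le> m" "m < int (p - 1)" "\<chi> = teich_char m"
proof -
  obtain g where g: "coprime g (int p)" "\<And>a. coprime a (int p) \<Longrightarrow> \<exists>i<p - 1. [g ^ i = a] (mod int p)"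
    using primitive_root_int by metis
  define c where "c = \<chi> g 1"
  have c: "coprime c (int p)"
    unfolding c_def using assms g(1) zp_UnitsD unfolding is_char_def by blast
  obtain i where i: "i < p - 1" "[g ^ i = c] (mod int p)" using g(2)[OF c] by blast
  have "\<chi> g = teich_pow c 1"
    using char_eq_teichmuller_of_residue[OF assms g(1)] teich_pow_of_nat[OF c, of 1]
      teichmuller_in_carrier[OF prime c] unfolding c_def by simp
  also have "\<dots> = teich_pow g (int i)"
    using teich_pow_cong[OF cong_sym[OF i(2)]] teich_pow_power[OF g(1)] by simp
  finally have chi_g: "\<chi> g = teich_pow g (int i)" .
  have "\<chi> a = teich_pow a (int i)" if a: "coprime a (int p)" for a
  proof -
    obtain j where j: "[g ^ j = a] (mod int p)" using g(2)[OF a] by blast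
    have "\<chi> a = \<chi> (g ^ j)" using assms j unfolding is_char_def by (metis cong_sym)
    also have "\<dots> = teich_pow g (int j * int i)"
      using char_power[OF assms g(1)] chi_g teich_pow_nat_pow[OF g(1)] by simp
    also have "\<dots> = teich_pow (g ^ j) (int i)" using teich_pow_power[OF g(1)] by simp
    also have "\<dots> = teich_pow a (int i)" using teich_pow_cong[OF j] .
    finally show ?thesis .
  qed
  then have "\<chi> = teich_char (int i)"
    using assms unfolding teich_char_def is_char_def by auto
  moreover have "int i < int (p - 1)" using i(1) by (simp only: of_nat_less_iff)
  ultimately show ?thesis by (intro that[of "int i"] of_nat_0_le_iff)
qed

lemma teich_char_inj:
  assumes "0 \<le> k" "k < int (p - 1)" "0 \<le> l" "l < int (p - 1)" "teich_char k = teich_char l"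
  shows "k = l"
proof -
  obtain g where g: "coprime g (int p)"
    "\<And>i j. i < p - 1 \<Longrightarrow> j < p - 1 \<Longrightarrow> [g ^ i = g ^ j] (mod int p) \<Longrightarrow> i = j"
    using primitive_root_int by metis
  have "teich_pow g k 1 = teich_pow g l 1"
    using fun_cong[OF assms(5), of g] g(1) unfolding teich_char_def by simp
  then have "[g ^ nat k = g ^ nat l] (mod int p)"
    using teich_pow_mod_p[OF g(1)] assms(1-4) by (simp add: cong_def)
  then have "nat k = nat l" using g(2) assms(1-4) by simp
  then show ?thesis using assms by simp
qed

lemma Delta_char_eq_teich_char:
  assumes "is_Delta_char p p \<theta>"
  obtains m where "0 \<le> m" "m < int (p - 1)" "even m" "\<theta> = teich_char m"
proof -
  obtain m where m: "0 \<le> m" "m < int (p - 1)" "\<theta> = teich_char m"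
    using char_eq_teich_char assms unfolding is_Delta_char_def by blast
  have "teich_pow (-1) m = \<one>\<^bsub>Zp\<^esub>"
    using assms m(3) unfolding is_Delta_char_def teich_char_def by simp
  then have "[(-1) ^ nat m = 1] (mod int p)"
    using teich_pow_mod_p[of "-1" m] m(1,2) by (simp add: padic_ints_simps cong_def)
  moreover have "\<not> [-1 = 1] (mod int p)"
    using p_ge_3 zdvd_imp_le[of "int p" 2] by (auto simp: cong_iff_dvd_diff)
  ultimately have "even (nat m)" by (cases "even (nat m)") auto
  then show ?thesis using that m by (simp add: even_nat_iff)
qed

definition unit_reps :: "int set" where
  "unit_reps = {a \<in> {0..<int p}. coprime a (int p)}"

lemma finite_unit_reps: "finite unit_reps"
  unfolding unit_reps_def by (rule finite_subset[of _ "{0..<int p}"]) auto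

lemma unit_reps_coprime: "a \<in> unit_reps \<Longrightarrow> coprime a (int p)"
  unfolding unit_reps_def by simp

lemma mod_in_unit_reps: "coprime x (int p) \<Longrightarrow> x mod int p \<in> unit_reps"
  unfolding unit_reps_def using p_pos by simp

lemma unit_reps_cong_imp_eq: "a \<in> unit_reps \<Longrightarrow> b \<in> unit_reps \<Longrightarrow> [a = b] (mod int p) \<Longrightarrow> a = b"
  unfolding unit_reps_def cong_def by simp

lemma sum_unit_reps_reindex_mult:
  assumes "coprime s (int p)"
  shows "(\<Sum>a\<in>unit_reps. G a) = (\<Sum>a\<in>unit_reps. G ((a * s) mod int p))"
proof -
  have inj: "inj_on (\<lambda>a. (a * s) mod int p) unit_reps"
  proof (rule inj_onI)
    fix a b assume "a \<in> unit_reps" "b \<in> unit_reps" "(a * s) mod int p = (b * s) mod int p"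
    then show "a = b"
      using cong_mult_rcancel[OF assms] unit_reps_cong_imp_eq unfolding cong_def by blast
  qed
  moreover have "(\<lambda>a. (a * s) mod int p) ` unit_reps \<subseteq> unit_reps"
    using mod_in_unit_reps unit_reps_coprime assms by auto
  ultimately have "bij_betw (\<lambda>a. (a * s) mod int p) unit_reps unit_reps"
    using endo_inj_surj[OF finite_unit_reps] unfolding bij_betw_def by blast
  then show ?thesis by (rule sum.reindex_bij_betw[symmetric])
qed

lemma sum_unit_reps_delta:
  assumes "coprime y (int p)"
  shows "(\<Sum>x\<in>unit_reps. if [x = y] (mod int p) then F x else 0) = F (y mod int p)"
proof -
  have "{x \<in> unit_reps. [x = y] (mod int p)} = {y mod int p}"
    using mod_in_unit_reps[OF assms] unit_reps_cong_imp_eq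
    by (auto simp: cong_def)
  then show ?thesis
    using sum.inter_filter[OF finite_unit_reps, of F "\<lambda>x. [x = y] (mod int p)"] by simp
qed

text \<open>Since y^(p-1) \<equiv> 1 (mod p), the power y^(p-2) serves as an inverse of y modulo p.\<close>

lemma mult_power_p_minus_2: "y * y ^ (p - 2) = y ^ (p - 1)"
  using p_ge_3 by (simp add: power_Suc[symmetric] Suc_diff_Suc numeral_2_eq_2)

lemma teich_pow_power_p_minus_2:
  assumes "coprime y (int p)"
  shows "teich_pow (y ^ (p - 2)) k = teich_pow y (- k)"
proof -
  have "int (p - 2) * k - (- k) = int (p - 1) * k"
    using p_ge_3 by (simp add: algebra_simps of_nat_diff)
  then have "[int (p - 2) * k = - k] (mod int (p - 1))"
    by (simp add: cong_iff_dvd_diff)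
  then show ?thesis using teich_pow_power[OF assms] teich_pow_exp_cong by metis
qed

lemma teich_pow_quotient_kernel:
  assumes x: "coprime x (int p)" and y: "coprime y (int p)"
  shows "teich_pow y (m - k) \<otimes>\<^bsub>Zp\<^esub> teich_pow x (k - m)
    = teich_pow (x * y ^ (p - 2)) k \<otimes>\<^bsub>Zp\<^esub> teich_pow (x * y ^ (p - 2)) (- m)"
proof -
  have "teich_pow y (m - k) = teich_pow (y ^ (p - 2)) (k - m)"
    using teich_pow_power_p_minus_2[OF y, of "k - m"] by simp
  then have "teich_pow y (m - k) \<otimes>\<^bsub>Zp\<^esub> teich_pow x (k - m) = teich_pow (x * y ^ (p - 2)) (k - m)"
    using teich_pow_mult[OF x, of "y ^ (p - 2)"] teich_pow_in_carrier x y by (simp add: Zp.m_comm)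
  also have "\<dots> = teich_pow (x * y ^ (p - 2)) k \<otimes>\<^bsub>Zp\<^esub> teich_pow (x * y ^ (p - 2)) (- m)"
    using teich_pow_add[of "x * y ^ (p - 2)" k "- m"] x y by simp
  finally show ?thesis .
qed

lemma cong_mult_power_p_minus_2_one_iff:
  assumes "coprime x (int p)" "coprime y (int p)"
  shows "[x * y ^ (p - 2) = 1] (mod int p) \<longleftrightarrow> [x = y] (mod int p)"
proof -
  have y: "[y * y ^ (p - 2) = 1] (mod int p)"
    unfolding mult_power_p_minus_2 by (rule fermat_little_int[OF prime assms(2)])
  have "[x * y ^ (p - 2) = 1] (mod int p) \<longleftrightarrow> [x * y ^ (p - 2) = y * y ^ (p - 2)] (mod int p)"
    using y by (meson cong_sym cong_trans)
  also have "\<dots> \<longleftrightarrow> [x = y] (mod int p)"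
    using assms(2) by (simp add: cong_mult_rcancel)
  finally show ?thesis .
qed

end

locale padic_module = odd_prime +
  fixes smul :: "(nat \<Rightarrow> int) \<Rightarrow> 'h \<Rightarrow> 'h::ab_group_add"
  assumes module: "zp_module p smul"
begin

lemma smul_add_left:
  "x \<in> carrier Zp \<Longrightarrow> y \<in> carrier Zp \<Longrightarrow> smul (x \<oplus>\<^bsub>Zp\<^esub> y) v = smul x v + smul y v"
  using module unfolding zp_module_def by blast

lemma smul_smul:
  "x \<in> carrier Zp \<Longrightarrow> y \<in> carrier Zp \<Longrightarrow> smul x (smul y v) = smul (x \<otimes>\<^bsub>Zp\<^esub> y) v"
  using module unfolding zp_module_def by simp

lemma smul_add_right: "x \<in> carrier Zp \<Longrightarrow> smul x (v + w) = smul x v + smul x w"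
  using module unfolding zp_module_def by blast

lemma smul_one [simp]: "smul \<one>\<^bsub>Zp\<^esub> v = v"
  using module unfolding zp_module_def by blast

lemma smul_zero_left [simp]: "smul \<zero>\<^bsub>Zp\<^esub> v = 0"
  using smul_add_left[of "\<zero>\<^bsub>Zp\<^esub>" "\<zero>\<^bsub>Zp\<^esub>" v] by simp

lemma smul_zero_right [simp]: "x \<in> carrier Zp \<Longrightarrow> smul x 0 = 0"
  using smul_add_right[of x 0 0] by simp

lemma smul_minus_left: "x \<in> carrier Zp \<Longrightarrow> smul (\<ominus>\<^bsub>Zp\<^esub> x) v = - smul x v"
  using smul_add_left[of "\<ominus>\<^bsub>Zp\<^esub> x" x v] by (simp add: Zp.l_neg eq_neg_iff_add_eq_0)

lemma smul_diff_left:
  "x \<in> carrier Zp \<Longrightarrow> y \<in> carrier Zp \<Longrightarrow> smul (x \<ominus>\<^bsub>Zp\<^esub> y) v = smul x v - smul y v"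
  unfolding Zp.minus_eq by (simp add: smul_add_left smul_minus_left)

lemma smul_minus_right: "x \<in> carrier Zp \<Longrightarrow> smul x (- v) = - smul x v"
  using smul_add_right[of x v "- v"] by (simp add: eq_neg_iff_add_eq_0 add.commute)

lemma smul_sum_right: "x \<in> carrier Zp \<Longrightarrow> smul x (\<Sum>i\<in>I. f i) = (\<Sum>i\<in>I. smul x (f i))"
  by (induction I rule: infinite_finite_induct) (simp_all add: smul_add_right)

lemma smul_Units_cancel:
  assumes "u \<in> Units Zp" "smul u v = 0"
  shows "v = 0"
proof -
  have "v = smul (inv\<^bsub>Zp\<^esub> u) (smul u v)" using assms(1) by (simp add: smul_smul Zp.Units_closed)
  then show ?thesis using assms by simp
qed

lemma span_sumI:
  assumes "finite F" "F \<subseteq> S" "\<And>x. x \<in> F \<Longrightarrow> c x \<in> carrier Zp"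
  shows "(\<Sum>x\<in>F. smul (c x) x) \<in> zp_span p smul S"
  unfolding zp_span_def using assms by blast

lemma span_zero: "0 \<in> zp_span p smul S"
  using span_sumI[of "{}"] by simp

lemma span_base: "x \<in> S \<Longrightarrow> x \<in> zp_span p smul S"
  using span_sumI[of "{x}" S "\<lambda>_. \<one>\<^bsub>Zp\<^esub>"] by simp

lemma span_smul:
  assumes "c \<in> carrier Zp" "v \<in> zp_span p smul S"
  shows "smul c v \<in> zp_span p smul S"
proof -
  obtain F d where F: "finite F" "F \<subseteq> S" "\<forall>x\<in>F. d x \<in> carrier Zp" "v = (\<Sum>x\<in>F. smul (d x) x)"
    using assms(2) unfolding zp_span_def by blast
  have "smul c v = (\<Sum>x\<in>F. smul (c \<otimes>\<^bsub>Zp\<^esub> d x) x)"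
    unfolding F(4) using assms(1) F(3) by (simp add: smul_sum_right smul_smul)
  then show ?thesis using span_sumI[OF F(1,2)] F(3) assms(1) by simp
qed

lemma span_add:
  assumes "v \<in> zp_span p smul S" "w \<in> zp_span p smul S"
  shows "v + w \<in> zp_span p smul S"
proof -
  obtain F d where F: "finite F" "F \<subseteq> S" "\<forall>x\<in>F. d x \<in> carrier Zp" "v = (\<Sum>x\<in>F. smul (d x) x)"
    using assms(1) unfolding zp_span_def by blast
  obtain G e where G: "finite G" "G \<subseteq> S" "\<forall>x\<in>G. e x \<in> carrier Zp" "w = (\<Sum>x\<in>G. smul (e x) x)"
    using assms(2) unfolding zp_span_def by blast
  define d' where "d' x = (if x \<in> F then d x else \<zero>\<^bsub>Zp\<^esub>)" for x
  define e' where "e' x = (if x \<in> G then e x else \<zero>\<^bsub>Zp\<^esub>)" for x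
  have coeffs: "d' x \<in> carrier Zp" "e' x \<in> carrier Zp" for x
    unfolding d'_def e'_def using F(3) G(3) by auto
  have "v = (\<Sum>x\<in>F \<union> G. smul (d' x) x)"
    unfolding F(4) by (rule sum.mono_neutral_cong_left) (auto simp: F G d'_def)
  moreover have "w = (\<Sum>x\<in>F \<union> G. smul (e' x) x)"
    unfolding G(4) by (rule sum.mono_neutral_cong_left) (auto simp: F G e'_def)
  ultimately have "v + w = (\<Sum>x\<in>F \<union> G. smul (d' x \<oplus>\<^bsub>Zp\<^esub> e' x) x)"
    by (simp add: sum.distrib smul_add_left coeffs)
  then show ?thesis using span_sumI[of "F \<union> G"] F G coeffs by simp
qed

lemma span_sum:
  "(\<And>i. i \<in> I \<Longrightarrow> f i \<in> zp_span p smul S) \<Longrightarrow> (\<Sum>i\<in>I. f i) \<in> zp_span p smul S"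
  by (induction I rule: infinite_finite_induct) (simp_all add: span_zero span_add)

lemma span_mono: "S \<subseteq> T \<Longrightarrow> zp_span p smul S \<subseteq> zp_span p smul T"
  unfolding zp_span_def by blast

lemma in_span_if_Units_coeff:
  assumes "u \<in> Units Zp" "finite K" "\<And>k. k \<in> K \<Longrightarrow> c k \<in> carrier Zp \<and> v k \<in> S"
    and "smul u x + (\<Sum>k\<in>K. smul (c k) (v k)) = 0"
  shows "x \<in> zp_span p smul S"
proof -
  have "x = smul (inv\<^bsub>Zp\<^esub> u) (smul u x)" using assms(1) by (simp add: smul_smul Zp.Units_closed)
  also have "smul u x = smul (\<ominus>\<^bsub>Zp\<^esub> \<one>\<^bsub>Zp\<^esub>) (\<Sum>k\<in>K. smul (c k) (v k))"
    using assms(4) by (simp add: smul_minus_left eq_neg_iff_add_eq_0)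
  finally have x: "x = smul (inv\<^bsub>Zp\<^esub> u) (smul (\<ominus>\<^bsub>Zp\<^esub> \<one>\<^bsub>Zp\<^esub>) (\<Sum>k\<in>K. smul (c k) (v k)))" .
  have "(\<Sum>k\<in>K. smul (c k) (v k)) \<in> zp_span p smul S"
    by (rule span_sum, rule span_smul) (use assms(3) span_base in auto)
  then show ?thesis unfolding x using assms(1) by (intro span_smul) simp_all
qed

text \<open>If x \<noteq> 1 mod p, then \<omega>(x) - 1 is a unit and kills the sum.\<close>

lemma teich_orthogonality:
  assumes "coprime x (int p)" "y \<in> carrier Zp"
  shows "(\<Sum>k<p - 1. smul (teich_pow x (int k) \<otimes>\<^bsub>Zp\<^esub> y) v) =
    (if [x = 1] (mod int p) then (\<Sum>k<p - 1. smul y v) else 0)"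
proof -
  let ?w = "teichmuller p x"
  have w: "?w \<in> carrier Zp" using teichmuller_in_carrier[OF prime assms(1)] .
  define f where "f k = smul (?w [^]\<^bsub>Zp\<^esub> k) (smul y v)" for k :: nat
  have sum_eq: "(\<Sum>k<p - 1. smul (teich_pow x (int k) \<otimes>\<^bsub>Zp\<^esub> y) v) = (\<Sum>k<p - 1. f k)"
    unfolding f_def using w assms by (simp add: teich_pow_of_nat smul_smul)
  show ?thesis
  proof (cases "[x = 1] (mod int p)")
    case True
    then have "?w = \<one>\<^bsub>Zp\<^esub>" using teichmuller_cong teichmuller_one[OF prime] by metis
    then show ?thesis using True sum_eq unfolding f_def by simp
  next
    case False
    have "f (p - 1) = f 0" unfolding f_def using teichmuller_pow_p_minus_1[OF prime assms(1)] by simp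
    then have "(\<Sum>k<p - 1. f (Suc k)) = (\<Sum>k<p - 1. f k)"
      using sum.lessThan_Suc_shift[of f "p - 1"] sum.lessThan_Suc[of f "p - 1"] by simp
    moreover have "smul ?w (\<Sum>k<p - 1. f k) = (\<Sum>k<p - 1. f (Suc k))"
      unfolding f_def using w assms(2) by (simp add: smul_sum_right smul_smul Zp.m_ac)
    ultimately have "smul (?w \<ominus>\<^bsub>Zp\<^esub> \<one>\<^bsub>Zp\<^esub>) (\<Sum>k<p - 1. f k) = 0"
      using w by (simp add: smul_diff_left)
    then show ?thesis
      using smul_Units_cancel[OF teichmuller_minus_one_in_Units[OF assms(1) False]] False sum_eq
      by simp
  qed
qed

end

section \<open>Sums of modular symbols\<close>

locale level_p_modsym = odd_prime +
  fixes smul :: "(nat \<Rightarrow> int) \<Rightarrow> 'h \<Rightarrow> 'h::ab_group_add"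
    and dia :: "int \<Rightarrow> 'h \<Rightarrow> 'h"
    and msym :: "int \<Rightarrow> int \<Rightarrow> 'h"
  assumes modsym: "modsym_space p p smul dia msym"
begin

sublocale padic_module p smul
  using modsym by unfold_locales (simp add: modsym_space_def)

lemma msym_cong: "[u = u'] (mod int p) \<Longrightarrow> [v = v'] (mod int p) \<Longrightarrow> msym u v = msym u' v'"
  using modsym unfolding modsym_space_def by (elim conjE) blast

lemma unimodular_if_coprime: "coprime u (int p) \<Longrightarrow> unimodular p u v"
  unfolding unimodular_def by (rule coprime_divisors[of _ u _ "int p"]) simp_all

lemma msym_antisym: "coprime u (int p) \<Longrightarrow> msym u v = - msym (- v) u"
  using modsym unimodular_if_coprime unfolding modsym_space_def by (elim conjE) blast

lemma msym_three_term_scaled: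
  assumes "coprime a (int p)"
  shows "msym a (a * t) = msym a (a * (t + 1)) + msym (a * (t + 1)) (a * t)"
proof -
  have "msym a (a * t) = msym a (a + a * t) + msym (a + a * t) (a * t)"
    using modsym unimodular_if_coprime[OF assms] unfolding modsym_space_def by (elim conjE) blast
  then show ?thesis by (simp add: algebra_simps)
qed

text \<open>alpha_sum m k is \<phi>(p)^2 times the symbol \<alpha> of the pair of characters (\<omega>^k, \<omega>^(m-k)).\<close>

definition alpha_sum :: "int \<Rightarrow> int \<Rightarrow> 'h" where
  "alpha_sum m k = (\<Sum>a\<in>unit_reps. \<Sum>b\<in>unit_reps.
     smul (teich_pow a (- k) \<otimes>\<^bsub>Zp\<^esub> teich_pow b (k - m)) (msym a b))"

text \<open>Substituting b = ax exhibits alpha_sum m as the Fourier transform of the function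
  x \<mapsto> twisted_sum m x (alpha_sum_eq_transform); the three-term Manin relation turns into a
  functional equation for twisted_sum (twisted_sum_three_term).\<close>

definition twisted_sum :: "int \<Rightarrow> int \<Rightarrow> 'h" where
  "twisted_sum m x = (\<Sum>a\<in>unit_reps. smul (teich_pow a (- m)) (msym a (a * x)))"

lemma twisted_sum_cong:
  assumes "[x = y] (mod int p)"
  shows "twisted_sum m x = twisted_sum m y"
proof -
  have "msym a (a * x) = msym a (a * y)" for a
    by (rule msym_cong) (simp_all add: assms cong_scalar_left)
  then show ?thesis unfolding twisted_sum_def by simp
qed

lemma alpha_sum_exp_cong:
  assumes "[k = l] (mod int (p - 1))"
  shows "alpha_sum m k = alpha_sum m l"
proof -
  have "[- k = - l] (mod int (p - 1))" "[k - m = l - m] (mod int (p - 1))"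
    using assms by (simp_all add: cong_minus_minus_iff cong_diff)
  then have "teich_pow a (- k) = teich_pow a (- l)" "teich_pow b (k - m) = teich_pow b (l - m)"
    for a b by (simp_all add: teich_pow_exp_cong)
  then show ?thesis unfolding alpha_sum_def by simp
qed

lemma alpha_sum_eq_transform:
  "alpha_sum m k = (\<Sum>x\<in>unit_reps. smul (teich_pow x (k - m)) (twisted_sum m x))"
proof -
  have "alpha_sum m k = (\<Sum>a\<in>unit_reps. \<Sum>x\<in>unit_reps.
      smul (teich_pow x (k - m)) (smul (teich_pow a (- m)) (msym a (a * x))))"
    unfolding alpha_sum_def
  proof (rule sum.cong[OF refl])
    fix a assume "a \<in> unit_reps"
    then have a: "coprime a (int p)" by (rule unit_reps_coprime)
    have "(\<Sum>b\<in>unit_reps. smul (teich_pow a (- k) \<otimes>\<^bsub>Zp\<^esub> teich_pow b (k - m)) (msym a b))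
        = (\<Sum>x\<in>unit_reps. smul (teich_pow a (- k) \<otimes>\<^bsub>Zp\<^esub> teich_pow ((x * a) mod int p) (k - m))
            (msym a ((x * a) mod int p)))"
      by (rule sum_unit_reps_reindex_mult[OF a])
    also have "\<dots> = (\<Sum>x\<in>unit_reps.
        smul (teich_pow x (k - m)) (smul (teich_pow a (- m)) (msym a (a * x))))"
    proof (rule sum.cong[OF refl])
      fix x assume "x \<in> unit_reps"
      then have x: "coprime x (int p)" by (rule unit_reps_coprime)
      have "teich_pow a (- k) \<otimes>\<^bsub>Zp\<^esub> teich_pow ((x * a) mod int p) (k - m)
          = teich_pow x (k - m) \<otimes>\<^bsub>Zp\<^esub> (teich_pow a (- k) \<otimes>\<^bsub>Zp\<^esub> teich_pow a (k - m))"
        using teich_pow_cong[of "(x * a) mod int p" "x * a"] teich_pow_mult[OF x a]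
          teich_pow_in_carrier a x by (simp add: cong_def Zp.m_ac)
      also have "\<dots> = teich_pow x (k - m) \<otimes>\<^bsub>Zp\<^esub> teich_pow a (- m)"
        using teich_pow_add[OF a, of "- k" "k - m"] by simp
      finally show "smul (teich_pow a (- k) \<otimes>\<^bsub>Zp\<^esub> teich_pow ((x * a) mod int p) (k - m))
            (msym a ((x * a) mod int p))
          = smul (teich_pow x (k - m)) (smul (teich_pow a (- m)) (msym a (a * x)))"
        using msym_cong[of a a "(x * a) mod int p" "a * x"] teich_pow_in_carrier a x
        by (simp add: smul_smul cong_def mult.commute)
    qed
    finally show "(\<Sum>b\<in>unit_reps. smul (teich_pow a (- k) \<otimes>\<^bsub>Zp\<^esub> teich_pow b (k - m)) (msym a b))
        = (\<Sum>x\<in>unit_reps. smul (teich_pow x (k - m)) (smul (teich_pow a (- m)) (msym a (a * x))))" .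
  qed
  also have "\<dots> = (\<Sum>x\<in>unit_reps. smul (teich_pow x (k - m)) (twisted_sum m x))"
    unfolding twisted_sum_def using teich_pow_in_carrier unit_reps_coprime
    by (subst sum.swap) (simp add: smul_sum_right)
  finally show ?thesis .
qed

text \<open>Fourier inversion, by orthogonality of the characters.\<close>

lemma twisted_sum_inversion:
  assumes "coprime y (int p)"
  shows "(\<Sum>k<p - 1. smul (teich_pow y (m - int k)) (alpha_sum m (int k)))
    = (\<Sum>k<p - 1. twisted_sum m y)"
proof -
  define z where "z x = x * y ^ (p - 2)" for x
  have z: "coprime (z x) (int p)" if "coprime x (int p)" for x
    unfolding z_def using that assms by simp
  have coeff: "teich_pow y (m - k) \<otimes>\<^bsub>Zp\<^esub> teich_pow x (k - m)
      = teich_pow (z x) k \<otimes>\<^bsub>Zp\<^esub> teich_pow (z x) (- m)" if "coprime x (int p)" for x k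
    unfolding z_def by (rule teich_pow_quotient_kernel[OF that assms])
  have "(\<Sum>k<p - 1. smul (teich_pow y (m - int k)) (alpha_sum m (int k)))
      = (\<Sum>x\<in>unit_reps. \<Sum>k<p - 1.
          smul (teich_pow (z x) (int k) \<otimes>\<^bsub>Zp\<^esub> teich_pow (z x) (- m)) (twisted_sum m x))"
    unfolding alpha_sum_eq_transform using assms teich_pow_in_carrier unit_reps_coprime
    by (subst sum.swap) (simp add: smul_sum_right smul_smul coeff)
  also have "\<dots> = (\<Sum>x\<in>unit_reps. if [x = y] (mod int p) then (\<Sum>k<p - 1. twisted_sum m x) else 0)"
  proof (rule sum.cong[OF refl])
    fix x assume "x \<in> unit_reps"
    then have x: "coprime x (int p)" by (rule unit_reps_coprime)
    have "[z x = 1] (mod int p) \<longleftrightarrow> [x = y] (mod int p)"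
      unfolding z_def by (rule cong_mult_power_p_minus_2_one_iff[OF x assms])
    moreover have "teich_pow (z x) (- m) = \<one>\<^bsub>Zp\<^esub>" if "[z x = 1] (mod int p)"
      using teich_pow_cong[OF that] teich_pow_one by simp
    ultimately show "(\<Sum>k<p - 1. smul (teich_pow (z x) (int k) \<otimes>\<^bsub>Zp\<^esub> teich_pow (z x) (- m))
          (twisted_sum m x))
        = (if [x = y] (mod int p) then (\<Sum>k<p - 1. twisted_sum m x) else 0)"
      using teich_orthogonality[OF z[OF x] teich_pow_in_carrier[OF z[OF x]]] by simp
  qed
  also have "\<dots> = (\<Sum>k<p - 1. twisted_sum m (y mod int p))"
    by (rule sum_unit_reps_delta[OF assms])
  finally show ?thesis using twisted_sum_cong[of "y mod int p" y m] by (simp add: cong_def)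
qed

lemma twisted_sum_rescale:
  assumes s: "coprime s (int p)"
  shows "smul (teich_pow s m) (twisted_sum m (t * s ^ (p - 2)))
    = (\<Sum>a\<in>unit_reps. smul (teich_pow a (- m)) (msym (a * s) (a * t)))"
proof -
  have "smul (teich_pow s m) (twisted_sum m (t * s ^ (p - 2)))
      = (\<Sum>a\<in>unit_reps. smul (teich_pow s m \<otimes>\<^bsub>Zp\<^esub> teich_pow a (- m))
          (msym a (a * (t * s ^ (p - 2)))))"
    unfolding twisted_sum_def using s teich_pow_in_carrier unit_reps_coprime
    by (simp add: smul_sum_right smul_smul)
  also have "\<dots> = (\<Sum>a\<in>unit_reps. smul (teich_pow s m \<otimes>\<^bsub>Zp\<^esub> teich_pow ((a * s) mod int p) (- m))
          (msym ((a * s) mod int p) ((a * s) mod int p * (t * s ^ (p - 2)))))"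
    by (rule sum_unit_reps_reindex_mult[OF s])
  also have "\<dots> = (\<Sum>a\<in>unit_reps. smul (teich_pow a (- m)) (msym (a * s) (a * t)))"
  proof (rule sum.cong[OF refl])
    fix a assume "a \<in> unit_reps"
    then have a: "coprime a (int p)" by (rule unit_reps_coprime)
    have "teich_pow s m \<otimes>\<^bsub>Zp\<^esub> teich_pow ((a * s) mod int p) (- m)
        = teich_pow a (- m) \<otimes>\<^bsub>Zp\<^esub> (teich_pow s m \<otimes>\<^bsub>Zp\<^esub> teich_pow s (- m))"
      using teich_pow_cong[of "(a * s) mod int p" "a * s"] teich_pow_mult[OF a s]
        teich_pow_in_carrier a s by (simp add: cong_def Zp.m_ac)
    then have coeff: "teich_pow s m \<otimes>\<^bsub>Zp\<^esub> teich_pow ((a * s) mod int p) (- m) = teich_pow a (- m)"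
      using teich_pow_inverse[OF s] teich_pow_in_carrier[OF a] by simp
    have "[(a * s) mod int p * (t * s ^ (p - 2)) = (a * s) * (t * s ^ (p - 2))] (mod int p)"
      by (rule cong_mult[OF _ cong_refl]) (simp add: cong_def)
    also have "(a * s) * (t * s ^ (p - 2)) = a * t * (s * s ^ (p - 2))"
      by (simp add: ac_simps)
    also have "[a * t * (s * s ^ (p - 2)) = a * t * 1] (mod int p)"
      unfolding mult_power_p_minus_2 by (rule cong_mult[OF cong_refl fermat_little_int[OF prime s]])
    finally have "msym ((a * s) mod int p) ((a * s) mod int p * (t * s ^ (p - 2))) = msym (a * s) (a * t)"
      by (intro msym_cong) (simp_all add: cong_def)
    then show "smul (teich_pow s m \<otimes>\<^bsub>Zp\<^esub> teich_pow ((a * s) mod int p) (- m))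
          (msym ((a * s) mod int p) ((a * s) mod int p * (t * s ^ (p - 2))))
        = smul (teich_pow a (- m)) (msym (a * s) (a * t))"
      using coeff by simp
  qed
  finally show ?thesis .
qed

lemma twisted_sum_three_term:
  assumes t: "coprime t (int p)" and s: "coprime (t + 1) (int p)"
  shows "twisted_sum m t =
    twisted_sum m (t + 1) + smul (teich_pow (t + 1) m) (twisted_sum m (t * (t + 1) ^ (p - 2)))"
proof -
  have "smul (teich_pow a (- m)) (msym a (a * t)) = smul (teich_pow a (- m)) (msym a (a * (t + 1)))
      + smul (teich_pow a (- m)) (msym (a * (t + 1)) (a * t))" if "a \<in> unit_reps" for a
    using msym_three_term_scaled[of a t] unit_reps_coprime[OF that] teich_pow_in_carrier
    by (simp add: smul_add_right)
  then show ?thesis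
    unfolding twisted_sum_rescale[OF s] unfolding twisted_sum_def by (simp add: sum.distrib)
qed

text \<open>The coefficient of alpha_sum m k in the Fourier expansion of
  F(t) - F(s) - \<omega>^m(s) F(t/s), where F = twisted_sum m.\<close>

definition relation_coeff :: "int \<Rightarrow> int \<Rightarrow> int \<Rightarrow> int \<Rightarrow> nat \<Rightarrow> int" where
  "relation_coeff m t s k = (teich_pow t (m - k) \<ominus>\<^bsub>Zp\<^esub> teich_pow s (m - k))
     \<ominus>\<^bsub>Zp\<^esub> teich_pow t (m - k) \<otimes>\<^bsub>Zp\<^esub> teich_pow s k"

lemma relation_coeff_in_carrier:
  "coprime t (int p) \<Longrightarrow> coprime s (int p) \<Longrightarrow> relation_coeff m t s k \<in> carrier Zp"
  unfolding relation_coeff_def using teich_pow_in_carrier by simp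

lemma alpha_sum_three_term_relation:
  assumes t: "coprime t (int p)" and s: "coprime (t + 1) (int p)"
  shows "(\<Sum>k<p - 1. smul (relation_coeff m t (t + 1) (int k)) (alpha_sum m (int k))) = 0"
proof -
  let ?s = "t + 1"
  define z where "z = t * ?s ^ (p - 2)"
  have z: "coprime z (int p)" unfolding z_def using t s by simp
  define \<Phi> where "\<Phi> y = (\<Sum>k<p - 1. smul (teich_pow y (m - int k)) (alpha_sum m (int k)))" for y
  have coeff: "relation_coeff m t ?s k = (teich_pow t (m - k) \<ominus>\<^bsub>Zp\<^esub> teich_pow ?s (m - k))
      \<ominus>\<^bsub>Zp\<^esub> teich_pow ?s m \<otimes>\<^bsub>Zp\<^esub> teich_pow z (m - k)" for k
  proof -
    have "teich_pow z (m - k) = teich_pow t (m - k) \<otimes>\<^bsub>Zp\<^esub> teich_pow ?s (k - m)"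
      unfolding z_def using teich_pow_mult[OF t, of "?s ^ (p - 2)"] s
        teich_pow_power_p_minus_2[OF s, of "m - k"] by simp
    then have "teich_pow ?s m \<otimes>\<^bsub>Zp\<^esub> teich_pow z (m - k)
        = teich_pow t (m - k) \<otimes>\<^bsub>Zp\<^esub> (teich_pow ?s m \<otimes>\<^bsub>Zp\<^esub> teich_pow ?s (k - m))"
      using teich_pow_in_carrier t s by (simp add: Zp.m_lcomm)
    also have "\<dots> = teich_pow t (m - k) \<otimes>\<^bsub>Zp\<^esub> teich_pow ?s k"
      using teich_pow_add[OF s, of m "k - m"] by simp
    finally show ?thesis unfolding relation_coeff_def by simp
  qed
  have "(\<Sum>k<p - 1. smul (relation_coeff m t ?s (int k)) (alpha_sum m (int k)))
      = \<Phi> t - \<Phi> ?s - smul (teich_pow ?s m) (\<Phi> z)"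
    unfolding coeff \<Phi>_def using teich_pow_in_carrier t s z
    by (simp add: smul_diff_left smul_smul smul_sum_right sum_subtractf)
  also have "\<dots> = (\<Sum>k<p - 1. twisted_sum m t - twisted_sum m ?s
      - smul (teich_pow ?s m) (twisted_sum m z))"
    unfolding \<Phi>_def twisted_sum_inversion[OF t] twisted_sum_inversion[OF s]
      twisted_sum_inversion[OF z]
    using teich_pow_in_carrier[OF s] by (simp add: smul_sum_right sum_subtractf)
  also have "\<dots> = 0"
    using twisted_sum_three_term[OF t s, of m] unfolding z_def by simp
  finally show ?thesis .
qed

text \<open>The relation [u:v] = -[-v:u] swaps the two characters of the symbol.\<close>

lemma alpha_sum_reflect:
  "alpha_sum m (m - k) = - smul (teich_pow (-1) (- k)) (alpha_sum m k)"
proof -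
  define c where "c = teich_pow (-1) (- k)"
  have minus_one: "coprime (-1::int) (int p)" by simp
  have c: "c \<in> carrier Zp" unfolding c_def using teich_pow_in_carrier[OF minus_one] .
  have "alpha_sum m (m - k) = (\<Sum>a\<in>unit_reps. \<Sum>b\<in>unit_reps.
      - smul (teich_pow a (k - m) \<otimes>\<^bsub>Zp\<^esub> teich_pow b (- k)) (msym (- b) a))"
    unfolding alpha_sum_def
  proof (intro sum.cong refl)
    fix a b assume "a \<in> unit_reps" "b \<in> unit_reps"
    then show "smul (teich_pow a (- (m - k)) \<otimes>\<^bsub>Zp\<^esub> teich_pow b (m - k - m)) (msym a b)
        = - smul (teich_pow a (k - m) \<otimes>\<^bsub>Zp\<^esub> teich_pow b (- k)) (msym (- b) a)"
      using msym_antisym[of a b] unit_reps_coprime teich_pow_in_carrier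
      by (simp add: smul_minus_right)
  qed
  also have "\<dots> = - (\<Sum>b\<in>unit_reps. \<Sum>a\<in>unit_reps.
      smul (teich_pow a (k - m) \<otimes>\<^bsub>Zp\<^esub> teich_pow b (- k)) (msym (- b) a))"
    by (subst sum.swap) (simp add: sum_negf)
  also have "(\<Sum>b\<in>unit_reps. \<Sum>a\<in>unit_reps.
      smul (teich_pow a (k - m) \<otimes>\<^bsub>Zp\<^esub> teich_pow b (- k)) (msym (- b) a))
    = (\<Sum>b\<in>unit_reps. \<Sum>a\<in>unit_reps. smul (teich_pow a (k - m) \<otimes>\<^bsub>Zp\<^esub>
        teich_pow ((b * -1) mod int p) (- k)) (msym (- ((b * -1) mod int p)) a))"
    by (rule sum_unit_reps_reindex_mult[OF minus_one])
  also have "\<dots> = (\<Sum>b\<in>unit_reps. \<Sum>a\<in>unit_reps.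
      smul c (smul (teich_pow b (- k) \<otimes>\<^bsub>Zp\<^esub> teich_pow a (k - m)) (msym b a)))"
  proof (intro sum.cong refl)
    fix b a assume "b \<in> unit_reps" "a \<in> unit_reps"
    then have a: "coprime a (int p)" and b: "coprime b (int p)" using unit_reps_coprime by auto
    have "teich_pow ((b * -1) mod int p) (- k) = teich_pow b (- k) \<otimes>\<^bsub>Zp\<^esub> c"
      unfolding c_def using teich_pow_cong[of "(b * -1) mod int p" "b * -1"]
        teich_pow_mult[OF b minus_one] by (simp add: cong_def)
    moreover have "msym (- ((b * -1) mod int p)) a = msym b a"
      by (rule msym_cong) (simp_all add: cong_def mod_minus_eq)
    ultimately show "smul (teich_pow a (k - m) \<otimes>\<^bsub>Zp\<^esub> teich_pow ((b * -1) mod int p) (- k))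
          (msym (- ((b * -1) mod int p)) a)
        = smul c (smul (teich_pow b (- k) \<otimes>\<^bsub>Zp\<^esub> teich_pow a (k - m)) (msym b a))"
      using c teich_pow_in_carrier[OF a] teich_pow_in_carrier[OF b] by (simp add: smul_smul Zp.m_ac)
  qed
  also have "\<dots> = smul c (alpha_sum m k)"
    unfolding alpha_sum_def using c by (simp add: smul_sum_right)
  finally show ?thesis unfolding c_def .
qed

lemma alpha_sum_reflect_two:
  assumes "[e = m - 2] (mod int (p - 1))"
  shows "alpha_sum m e = - alpha_sum m 2"
  using alpha_sum_exp_cong[OF assms] alpha_sum_reflect[of m 2] teich_pow_minus_one_even[of "-1"]
  by simp

abbreviation totient_sq_inv :: "nat \<Rightarrow> int" where
  "totient_sq_inv \<equiv> inv\<^bsub>Zp\<^esub> (zp_of_int p (int (totient p) ^ 2))"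

lemma totient_sq_inv_in_carrier: "totient_sq_inv \<in> carrier Zp"
proof -
  have "coprime (int p - 1) (int p)" by (rule coprime_diff_one_left)
  then have "coprime (int (totient p) ^ 2) (int p)"
    using totient_prime[OF prime] p_pos by (simp add: of_nat_diff)
  then show ?thesis using zp_of_int_in_Units by simp
qed

lemma alpha_sym_teich_char:
  "alpha_sym p p smul msym 1 1 (teich_char j) (char_mult p p (teich_char m) (char_inv p p (teich_char j)))
     = smul totient_sq_inv (alpha_sum m j)"
proof -
  have "char_inv p p (char_mult p p (teich_char m) (char_inv p p (teich_char j))) = teich_char (j - m)"
    by (simp add: char_inv_teich_char char_mult_teich_char)
  then show ?thesis
    unfolding alpha_sym_def alpha_sum_def unit_reps_def[symmetric] char_inv_teich_char
    by (intro arg_cong[where f = "smul _"] sum.cong refl) (simp add: teich_char_def unit_reps_coprime)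
qed

lemma relation_coeff_mod_p:
  assumes t: "coprime t (int p)" and s: "coprime s (int p)"
    and "[m - k = j] (mod int (p - 1))" "0 \<le> j" "j < int (p - 1)" "0 \<le> k" "k < int (p - 1)"
  shows "[relation_coeff m t s k 1 = t ^ nat j - s ^ nat j - t ^ nat j * s ^ nat k] (mod int p)"
proof -
  let ?a = "teich_pow t (m - k)" and ?b = "teich_pow s (m - k)" and ?c = "teich_pow s k"
  have "[relation_coeff m t s k 1 = (?a \<ominus>\<^bsub>Zp\<^esub> ?b) 1 - (?a \<otimes>\<^bsub>Zp\<^esub> ?c) 1] (mod int p)"
    unfolding relation_coeff_def using teich_pow_in_carrier t s by (intro zp_minus_mod_p) simp
  also have "[(?a \<ominus>\<^bsub>Zp\<^esub> ?b) 1 - (?a \<otimes>\<^bsub>Zp\<^esub> ?c) 1 = (?a 1 - ?b 1) - ?a 1 * ?c 1] (mod int p)"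
    using teich_pow_in_carrier[OF s] by (intro cong_diff zp_minus_mod_p zp_mult_mod_p)
  also have "[(?a 1 - ?b 1) - ?a 1 * ?c 1 = t ^ nat j - s ^ nat j - t ^ nat j * s ^ nat k] (mod int p)"
    using assms teich_pow_mod_p[OF s assms(6,7)]
    by (intro cong_diff cong_mult teich_pow_mod_p_cong) (simp_all add: cong_def)
  finally show ?thesis .
qed

lemma relation_coeff_gap_in_Units:
  assumes t: "coprime t (int p)" and s: "coprime (t + 1) (int p)"
    and e: "[m - 2 = e] (mod int (p - 1))" "2 < e" "e < int (p - 1)"
    and gap: "\<not> int p dvd gap_poly (nat e) t (t + 1)"
  shows "relation_coeff m t (t + 1) 2 \<ominus>\<^bsub>Zp\<^esub> relation_coeff m t (t + 1) e \<in> Units Zp"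
proof (rule zp_UnitsI[OF prime])
  let ?c = "relation_coeff m t (t + 1)"
  have e': "[m - e = 2] (mod int (p - 1))"
    using e(1) by (simp add: cong_iff_dvd_diff dvd_diff_commute algebra_simps)
  show "?c 2 \<ominus>\<^bsub>Zp\<^esub> ?c e \<in> carrier Zp" using relation_coeff_in_carrier[OF t s] by simp
  have "[(?c 2 \<ominus>\<^bsub>Zp\<^esub> ?c e) 1 = ?c 2 1 - ?c e 1] (mod int p)"
    using relation_coeff_in_carrier[OF t s] by (rule zp_minus_mod_p)
  also have "[?c 2 1 - ?c e 1 = gap_poly (nat e) t (t + 1)] (mod int p)"
  proof -
    have "[?c 2 1 = t ^ nat e - (t + 1) ^ nat e - t ^ nat e * (t + 1) ^ nat 2] (mod int p)"
      by (rule relation_coeff_mod_p[OF t s e(1)]) (use e in simp_all)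
    moreover have "[?c e 1 = t ^ nat 2 - (t + 1) ^ nat 2 - t ^ nat 2 * (t + 1) ^ nat e] (mod int p)"
      by (rule relation_coeff_mod_p[OF t s e']) (use e in simp_all)
    ultimately have "[?c 2 1 - ?c e 1 = (t ^ nat e - (t + 1) ^ nat e - t ^ nat e * (t + 1) ^ nat 2)
        - (t ^ nat 2 - (t + 1) ^ nat 2 - t ^ nat 2 * (t + 1) ^ nat e)] (mod int p)"
      by (rule cong_diff)
    then show ?thesis by (simp add: gap_poly_def)
  qed
  finally have "[(?c 2 \<ominus>\<^bsub>Zp\<^esub> ?c e) 1 = gap_poly (nat e) t (t + 1)] (mod int p)" .
  moreover have "coprime (gap_poly (nat e) t (t + 1)) (int p)"
    using gap coprime_p_iff_not_dvd by simp
  ultimately show "coprime ((?c 2 \<ominus>\<^bsub>Zp\<^esub> ?c e) 1) (int p)"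
    using cong_imp_coprime cong_sym by blast
qed

text \<open>The three-term relation with parameter t involves \<alpha>(\<omega>^2) and \<alpha>(\<omega>^e) = -\<alpha>(\<omega>^2) with
  total coefficient c_2 - c_e, a unit by the choice of t.\<close>

lemma scaled_alpha_sum_two_in_span_of_relation:
  assumes t: "coprime t (int p)" and s: "coprime (t + 1) (int p)"
    and e: "[m - 2 = e] (mod int (p - 1))" "2 < e" "e < int (p - 1)"
    and gap: "\<not> int p dvd gap_poly (nat e) t (t + 1)"
    and d: "d \<in> carrier Zp"
  shows "smul d (alpha_sum m 2) \<in> zp_span p smul
    {smul d (alpha_sum m (int k)) | k. k < p - 1 \<and> int k \<noteq> 2 \<and> int k \<noteq> e}"
proof -
  let ?c = "relation_coeff m t (t + 1)" and ?v = "\<lambda>k. smul d (alpha_sum m (int k))"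
  define K where "K = {..<p - 1} - {2, nat e}"
  have split: "{..<p - 1} = insert 2 (insert (nat e) K)" "2 \<notin> insert (nat e) K" "nat e \<notin> K" "finite K"
    unfolding K_def using e by auto
  have v_e: "?v (nat e) = - ?v 2"
    using alpha_sum_reflect_two[OF cong_sym[OF e(1)]] e d by (simp add: smul_minus_right)
  have "(\<Sum>k<p - 1. smul (?c (int k)) (?v k)) = smul d (\<Sum>k<p - 1. smul (?c (int k)) (alpha_sum m (int k)))"
    using d relation_coeff_in_carrier[OF t s] by (simp add: smul_sum_right smul_smul Zp.m_comm)
  also have "\<dots> = 0" using alpha_sum_three_term_relation[OF t s] d by simp
  finally have "smul (?c 2) (?v 2) + smul (?c e) (?v (nat e)) + (\<Sum>k\<in>K. smul (?c (int k)) (?v k)) = 0"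
    unfolding split(1) using split(2-4) e by (simp add: add.assoc)
  then have "smul (?c 2 \<ominus>\<^bsub>Zp\<^esub> ?c e) (?v 2) + (\<Sum>k\<in>K. smul (?c (int k)) (?v k)) = 0"
    unfolding v_e using relation_coeff_in_carrier[OF t s]
    by (simp add: smul_diff_left smul_minus_right)
  then show ?thesis
    using split(4) relation_coeff_in_carrier[OF t s] e
    by (intro in_span_if_Units_coeff[OF relation_coeff_gap_in_Units[OF t s e gap]])
      (auto simp: K_def)
qed

lemma scaled_alpha_sum_two_in_span:
  assumes m: "even m" and e: "e = (m - 2) mod int (p - 1)" "e \<noteq> 0" and d: "d \<in> carrier Zp"
  shows "smul d (alpha_sum m 2) \<in> zp_span p smul
    {smul d (alpha_sum m (int k)) | k. k < p - 1 \<and> int k \<noteq> 2 \<and> int k \<noteq> e}"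
proof -
  have e_range: "0 \<le> e" "e < int (p - 1)" "[m - 2 = e] (mod int (p - 1))"
    unfolding e(1) using p_ge_3 by (simp_all add: cong_def)
  have "even (int (p - 1))" using odd p_pos by (simp add: of_nat_diff)
  moreover have "e = (m - 2) - (m - 2) div int (p - 1) * int (p - 1)"
    unfolding e(1) by (simp add: minus_div_mult_eq_mod)
  ultimately have even_e: "even e" using m by simp
  show ?thesis
  proof (cases "e = 2")
    case True
    have "alpha_sum m 2 = - alpha_sum m 2"
      using alpha_sum_reflect_two[OF cong_sym[OF e_range(3)]] True by simp
    then have "smul (\<one>\<^bsub>Zp\<^esub> \<oplus>\<^bsub>Zp\<^esub> \<one>\<^bsub>Zp\<^esub>) (alpha_sum m 2) = 0"
      by (simp add: smul_add_left eq_neg_iff_add_eq_0)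
    then have "alpha_sum m 2 = 0" using smul_Units_cancel[OF one_plus_one_in_Units] by blast
    then show ?thesis using d span_zero by simp
  next
    case False
    then have "4 \<le> e" using even_e e(2) e_range by presburger
    moreover have "e \<noteq> int p - 2" using even_e odd p_pos by (auto simp: of_nat_diff)
    ultimately have "even (nat e)" "4 \<le> nat e" "nat e + 3 \<le> p"
      using even_e e_range by (auto simp: even_nat_iff)
    then obtain t where t: "1 \<le> t" "t \<le> int p - 2" "\<not> int p dvd gap_poly (nat e) t (t + 1)"
      using exists_gap_poly_not_dvd[OF prime] by blast
    have "coprime t (int p)" "coprime (t + 1) (int p)"
      using t coprime_p_iff_not_dvd zdvd_imp_le by (auto, fastforce+)
    then show ?thesis
      using scaled_alpha_sum_two_in_span_of_relation t(3) e_range \<open>4 \<le> e\<close> d by simp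
  qed
qed

lemma scaled_alpha_sums_subset:
  assumes e: "0 \<le> e" "e < int (p - 1)" and p: "2 < int (p - 1)"
  shows "{smul totient_sq_inv (alpha_sum m (int k)) | k. k < p - 1 \<and> int k \<noteq> 2 \<and> int k \<noteq> e}
    \<subseteq> {alpha_sym p p smul msym 1 1 \<chi> (char_mult p p (teich_char m) (char_inv p p \<chi>)) | \<chi>.
         \<chi> \<in> char_group p p - {teich_char 2, teich_char e}}"
proof
  fix x assume "x \<in> {smul totient_sq_inv (alpha_sum m (int k)) | k.
    k < p - 1 \<and> int k \<noteq> 2 \<and> int k \<noteq> e}"
  then obtain k where x: "x = smul totient_sq_inv (alpha_sum m (int k))"
    and k: "k < p - 1" "int k \<noteq> 2" "int k \<noteq> e" by blast
  have ki: "0 \<le> int k" "int k < int (p - 1)" using k(1) by simp_all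
  have "teich_char (int k) \<noteq> teich_char 2" "teich_char (int k) \<noteq> teich_char e"
    using teich_char_inj[OF ki _ p] teich_char_inj[OF ki e] k(2,3) by auto
  then have "teich_char (int k) \<in> char_group p p - {teich_char 2, teich_char e}"
    using teich_char_in_char_group by simp
  then show "x \<in> {alpha_sym p p smul msym 1 1 \<chi> (char_mult p p (teich_char m) (char_inv p p \<chi>)) | \<chi>.
      \<chi> \<in> char_group p p - {teich_char 2, teich_char e}}"
    unfolding x alpha_sym_teich_char[symmetric] by blast
qed

lemma alpha_sym_teich_char_two_in_span:
  assumes "is_Delta_char p p \<theta>" "\<theta> \<noteq> teich_char 2"
  shows "alpha_sym p p smul msym 1 1 (teich_char 2) (char_mult p p \<theta> (char_inv p p (teich_char 2)))
    \<in> zp_span p smul {alpha_sym p p smul msym 1 1 \<chi> (char_mult p p \<theta> (char_inv p p \<chi>)) | \<chi>.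
         \<chi> \<in> char_group p p - {teich_char 2, char_mult p p \<theta> (char_inv p p (teich_char 2))}}"
proof -
  obtain m where m: "0 \<le> m" "m < int (p - 1)" "even m" "\<theta> = teich_char m"
    using Delta_char_eq_teich_char[OF assms(1)] by blast
  define e where "e = (m - 2) mod int (p - 1)"
  have e_cong: "[m - 2 = e] (mod int (p - 1))" by (simp add: e_def cong_def)
  have e: "0 \<le> e" "e < int (p - 1)" unfolding e_def using p_ge_3 by simp_all
  have \<theta>_e: "char_mult p p (teich_char m) (char_inv p p (teich_char 2)) = teich_char e"
    unfolding char_inv_teich_char char_mult_teich_char using teich_char_exp_cong[OF e_cong] by simp
  have "e \<noteq> 0"
  proof
    assume "e = 0"
    then have "[m = 2] (mod int (p - 1))" using e_cong by (simp add: cong_iff_dvd_diff)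
    then show False using assms(2) teich_char_exp_cong m(4) by simp
  qed
  have "p \<noteq> 3" \<comment> \<open>for p = 3 the only even character is \<omega>^2 = 1\<close>
  proof
    assume "p = 3"
    then have "m = 0" using m(1-3) by presburger
    then show False using \<open>e \<noteq> 0\<close> \<open>p = 3\<close> unfolding e_def by simp
  qed
  then have "2 < int (p - 1)" using p_ge_3 odd by presburger
  then show ?thesis
    unfolding m(4) alpha_sym_teich_char unfolding \<theta>_e
    using subsetD[OF span_mono[OF scaled_alpha_sums_subset[OF e]]
        scaled_alpha_sum_two_in_span[OF m(3) e_def \<open>e \<noteq> 0\<close> totient_sq_inv_in_carrier]]
    by simp
qed

end

lemma alpha_sym_one_one_subset:
  "{alpha_sym p p smul msym 1 1 \<chi> (\<psi> \<chi>) | \<chi>. \<chi> \<in> S}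
    \<subseteq> {alpha_sym p p smul msym g h \<chi> (\<psi> \<chi>) | \<chi> g h.
        \<chi> \<in> S \<and> g > 0 \<and> h > 0 \<and> g dvd int p \<and> h dvd int p \<and> coprime g h}"
  by (auto intro!: exI[of _ 1])

theorem lemma2p18:
  fixes p :: nat
    and \<theta> :: "int \<Rightarrow> nat \<Rightarrow> int"
    and smul :: "(nat \<Rightarrow> int) \<Rightarrow> 'h \<Rightarrow> 'h::ab_group_add"
    and dia :: "int \<Rightarrow> 'h \<Rightarrow> 'h"
    and msym :: "int \<Rightarrow> int \<Rightarrow> 'h"
  assumes "prime p" and "odd p"
    and "modsym_space p p smul dia msym"
    and "is_Delta_char p p \<theta>"
    and "\<theta> \<noteq> char_mult p p (teichmuller p) (teichmuller p)"
  defines "\<omega>2 \<equiv> char_mult p p (teichmuller p) (teichmuller p)"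
  defines "\<theta>\<omega>m2 \<equiv> char_mult p p \<theta> (char_inv p p \<omega>2)"
  defines "\<beta> \<equiv> alpha_sym p p smul msym 1 1 \<omega>2 \<theta>\<omega>m2"
  defines "A \<equiv> zp_span p smul
      {alpha_sym p p smul msym g h \<chi> (char_mult p p \<theta> (char_inv p p \<chi>)) | \<chi> g h.
         \<chi> \<in> char_group p p - {\<omega>2, \<theta>\<omega>m2} \<and> g > 0 \<and> h > 0 \<and>
         g dvd int p \<and> h dvd int p \<and> coprime g h}"
  shows "\<beta> \<in> zp_span p smul
           {alpha_sym p p smul msym 1 1 \<chi> (char_mult p p \<theta> (char_inv p p \<chi>)) | \<chi>.
              \<chi> \<in> char_group p p - {\<omega>2, \<theta>\<omega>m2}}
         \<and> \<beta> \<in> A"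
proof -
  interpret level_p_modsym p smul dia msym
    by unfold_locales (use assms(1-3) in auto)
  have \<omega>2: "\<omega>2 = teich_char 2"
    unfolding \<omega>2_def by (rule teichmuller_squared)
  have "\<theta> \<noteq> teich_char 2" using assms(5) unfolding \<omega>2_def[symmetric] \<omega>2 .
  then have "\<beta> \<in> zp_span p smul
      {alpha_sym p p smul msym 1 1 \<chi> (char_mult p p \<theta> (char_inv p p \<chi>)) | \<chi>.
         \<chi> \<in> char_group p p - {\<omega>2, \<theta>\<omega>m2}}"
    unfolding \<beta>_def \<theta>\<omega>m2_def \<omega>2 by (rule alpha_sym_teich_char_two_in_span[OF assms(4)])
  moreover note alpha_sym_one_one_subset[of p smul msym "\<lambda>\<chi>. char_mult p p \<theta> (char_inv p p \<chi>)"]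
  ultimately show ?thesis unfolding A_def using span_mono by blast
qed

end
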